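(* Normal form bisimilarity is included in contextual equivalence: for all terms $t_0,t_1$ of $\lambda_{\mathcal S}$, if $t_0 \sim t_1$ then $t_0 \simeq_{\mathrm{ctx}} t_1$.
   Context: The calculus $\lambda_{\mathcal S}$ (call-by-value $\lambda$-calculus with shift and reset). Terms: $t ::= x \mid \lambda x.t \mid t\,t \mid \mathcal{S}k.t \mid \langle t\rangle$; values: $v ::= \lambda x.t \mid x$. $\lambda x.t$ binds $x$ in $t$ and $\mathcal{S}k.t$ binds $k$ in $t$; terms are identified up to $\alpha$-conversion; $\mathrm{fv}(t)$ is the set of free variables; $t\{v/x\}$ is capture-avoiding substitution. Pure contexts: $F ::= [\,] \mid v\,F \mid F\,t$. Evaluation contexts: $E ::= [\,] \mid v\,E \mid E\,t \mid \langle E\rangle$. General contexts: $C ::= [\,] \mid \lambda x.C \mid t\,C \mid C\,t \mid \mathcal{S}k.C \mid \langle C\rangle$; $C[t]$ is hole-filling (free variables of $t$ may be captured). Reduction $\to$: $E[(\lambda x.t)\,v] \to E[t\{v/x\}]$; $E[\langle F[\mathcal{S}k.t]\rangle] \to E[\langle t\{\lambda x.\langle F[x]\rangle/k\}\rangle]$ with $x\notin\mathrm{fv}(F)$; $E[\langle v\rangle]\to E[v]$. $\to^*$ is the reflexive-transitive closure, and $t \Downarrow t'$ means $t\to^* t'$ and $t'$ is irreducible. A term is stuck if it is not a value and is irreducible; a normal form is a value or a stuck term. Control stuck terms are those of the form $F[\mathcal{S}k.t]$; open stuck terms are those of the form $E[x\,v]$. A variable is fresh if it does not occur free in the terms/contexts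 under consideration. Contextual equivalence: $t_0 \simeq_{\mathrm{ctx}} t_1$ iff for every context $C$ such that $C[t_0]$ and $C[t_1]$ are closed, (i) $C[t_0]\Downarrow v_0$ for a value $v_0$ implies $C[t_1]\Downarrow v_1$ for some value $v_1$; (ii) $C[t_0]\Downarrow t_0'$ with $t_0'$ control stuck implies $C[t_1]\Downarrow t_1'$ with $t_1'$ control stuck; and symmetrically with $t_0,t_1$ exchanged. Normal form bisimilarity. Given a relation $\mathcal R$ on terms, extend it to evaluation contexts: $E_0 \mathrel{\mathcal R} E_1$ iff either $E_0 = E_0'[\langle F_0\rangle]$, $E_1 = E_1'[\langle F_1\rangle]$ with $F_0,F_1$ pure, $E_0'[x]\mathrel{\mathcal R}E_1'[x]$ and $\langle F_0[x]\rangle \mathrel{\mathcal R}\langle F_1[x]\rangle$ for a fresh $x$; or $E_0=F_0$, $E_1=F_1$ are pure and $F_0[x]\mathrel{\mathcal R}F_1[x]$ for a fresh $x$. Define $v\mathbin{@}y$ as $x\,y$ if $v=x$ and as $t\{y/x\}$ if $v=\lambda x.t$. Define $\mathcal R^{\mathrm{nf}}$ on normal forms inductively: $v_0 \mathrel{\mathcal R^{\mathrm{nf}}} v_1$ if $v_0\mathbin{@}x \mathrel{\mathcal R} v_1\mathbin{@}x$ for a fresh $x$; $F_0[\mathcal{S}k.t_0] \mathrel{\mathcal R^{\mathrm{nf}}} F_1[\mathcal{S}k.t_1]$ if $F_0\mathrel{\mathcal R}F_1$ and $\langle t_0\rangle\mathrel{\mathcal R}\langle t_1\rangle$; $E_0[x\,v_0]\mathrel{\mathcal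 R^{\mathrm{nf}}}E_1[x\,v_1]$ if $E_0\mathrel{\mathcal R}E_1$ and $v_0\mathrel{\mathcal R^{\mathrm{nf}}}v_1$. $\mathcal R$ is a normal form simulation if $t_0\mathrel{\mathcal R}t_1$ and $t_0\Downarrow t_0'$ imply $t_1\Downarrow t_1'$ for some $t_1'$ with $t_0'\mathrel{\mathcal R^{\mathrm{nf}}}t_1'$; it is a normal form bisimulation if both $\mathcal R$ and its inverse are normal form simulations. Normal form bisimilarity $\sim$ is the largest normal form bisimulation. *)

theory Defs
  imports Main
begin

text \<open>Locally nameless representation of the terms of lambda_S:
  bound variables are de Bruijn indices, free variables are names (nat).
  Locally closed terms correspond exactly to terms modulo alpha-conversion.\<close>

type_synonym var = nat

datatype trm = BV nat | FV var | Lam trm | App trm trm | Shift trm | Reset trm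

fun lc_at :: "nat \<Rightarrow> trm \<Rightarrow> bool" where
  "lc_at k (BV i) = (i < k)"
| "lc_at k (FV x) = True"
| "lc_at k (Lam t) = lc_at (Suc k) t"
| "lc_at k (App t u) = (lc_at k t \<and> lc_at k u)"
| "lc_at k (Shift t) = lc_at (Suc k) t"
| "lc_at k (Reset t) = lc_at k t"

abbreviation lc :: "trm \<Rightarrow> bool" where "lc t \<equiv> lc_at 0 t"

fun fv :: "trm \<Rightarrow> var set" where
  "fv (BV i) = {}"
| "fv (FV x) = {x}"
| "fv (Lam t) = fv t"
| "fv (App t u) = fv t \<union> fv u"
| "fv (Shift t) = fv t"
| "fv (Reset t) = fv t"

fun open_at :: "nat \<Rightarrow> trm \<Rightarrow> trm \<Rightarrow> trm" where
  "open_at k u (BV i) = (if i = k then u else BV i)"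
| "open_at k u (FV x) = FV x"
| "open_at k u (Lam t) = Lam (open_at (Suc k) u t)"
| "open_at k u (App t s) = App (open_at k u t) (open_at k u s)"
| "open_at k u (Shift t) = Shift (open_at (Suc k) u t)"
| "open_at k u (Reset t) = Reset (open_at k u t)"

abbreviation opn :: "trm \<Rightarrow> trm \<Rightarrow> trm" where "opn b u \<equiv> open_at 0 u b"

fun close_at :: "nat \<Rightarrow> var \<Rightarrow> trm \<Rightarrow> trm" where
  "close_at k x (BV i) = BV i"
| "close_at k x (FV y) = (if y = x then BV k else FV y)"
| "close_at k x (Lam t) = Lam (close_at (Suc k) x t)"
| "close_at k x (App t s) = App (close_at k x t) (close_at k x s)"
| "close_at k x (Shift t) = Shift (close_at (Suc k) x t)"
| "close_at k x (Reset t) = Reset (close_at k x t)"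

definition lam :: "var \<Rightarrow> trm \<Rightarrow> trm" where "lam x t = Lam (close_at 0 x t)"
definition shift :: "var \<Rightarrow> trm \<Rightarrow> trm" where "shift k t = Shift (close_at 0 k t)"

fun is_val :: "trm \<Rightarrow> bool" where
  "is_val (Lam t) = True"
| "is_val (FV x) = True"
| "is_val _ = False"

datatype ectx = Hole | ApR trm ectx | ApL ectx trm | Rst ectx

fun plugE :: "ectx \<Rightarrow> trm \<Rightarrow> trm" where
  "plugE Hole t = t"
| "plugE (ApR v E) t = App v (plugE E t)"
| "plugE (ApL E s) t = App (plugE E t) s"
| "plugE (Rst E) t = Reset (plugE E t)"

fun compE :: "ectx \<Rightarrow> ectx \<Rightarrow> ectx" where
  "compE Hole E' = E'"
| "compE (ApR v E) E' = ApR v (compE E E')"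
| "compE (ApL E s) E' = ApL (compE E E') s"
| "compE (Rst E) E' = Rst (compE E E')"

fun fvE :: "ectx \<Rightarrow> var set" where
  "fvE Hole = {}"
| "fvE (ApR v E) = fv v \<union> fvE E"
| "fvE (ApL E s) = fvE E \<union> fv s"
| "fvE (Rst E) = fvE E"

fun evctx :: "ectx \<Rightarrow> bool" where
  "evctx Hole = True"
| "evctx (ApR v E) = (is_val v \<and> lc v \<and> evctx E)"
| "evctx (ApL E s) = (evctx E \<and> lc s)"
| "evctx (Rst E) = evctx E"

fun pure :: "ectx \<Rightarrow> bool" where
  "pure Hole = True"
| "pure (ApR v E) = (is_val v \<and> lc v \<and> pure E)"
| "pure (ApL E s) = (pure E \<and> lc s)"
| "pure (Rst E) = False"

text \<open>General contexts; hole filling may capture free variables (named binders).\<close>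
datatype gctx = CHole | CLam var gctx | CAppL gctx trm | CAppR trm gctx
  | CShift var gctx | CReset gctx

fun plugC :: "gctx \<Rightarrow> trm \<Rightarrow> trm" where
  "plugC CHole t = t"
| "plugC (CLam x C) t = lam x (plugC C t)"
| "plugC (CAppL C s) t = App (plugC C t) s"
| "plugC (CAppR s C) t = App s (plugC C t)"
| "plugC (CShift k C) t = shift k (plugC C t)"
| "plugC (CReset C) t = Reset (plugC C t)"

fun wf_ctx :: "gctx \<Rightarrow> bool" where
  "wf_ctx CHole = True"
| "wf_ctx (CLam x C) = wf_ctx C"
| "wf_ctx (CAppL C s) = (wf_ctx C \<and> lc s)"
| "wf_ctx (CAppR s C) = (lc s \<and> wf_ctx C)"
| "wf_ctx (CShift k C) = wf_ctx C"
| "wf_ctx (CReset C) = wf_ctx C"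

inductive red :: "trm \<Rightarrow> trm \<Rightarrow> bool" where
  beta: "\<lbrakk>evctx E; is_val v; lc (plugE E (App (Lam b) v))\<rbrakk>
     \<Longrightarrow> red (plugE E (App (Lam b) v)) (plugE E (opn b v))"
| shift: "\<lbrakk>evctx E; pure F; x \<notin> fvE F; lc (plugE E (Reset (plugE F (Shift b))))\<rbrakk>
     \<Longrightarrow> red (plugE E (Reset (plugE F (Shift b))))
             (plugE E (Reset (opn b (lam x (Reset (plugE F (FV x)))))))"
| reset: "\<lbrakk>evctx E; is_val v; lc (plugE E (Reset v))\<rbrakk>
     \<Longrightarrow> red (plugE E (Reset v)) (plugE E v)"

definition irreducible :: "trm \<Rightarrow> bool" where
  "irreducible t \<longleftrightarrow> \<not> (\<exists>t'. red t t')"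

definition eval :: "trm \<Rightarrow> trm \<Rightarrow> bool" where
  "eval t t' \<longleftrightarrow> red\<^sup>*\<^sup>* t t' \<and> irreducible t'"

definition control_stuck :: "trm \<Rightarrow> bool" where
  "control_stuck t \<longleftrightarrow> (\<exists>F b. pure F \<and> t = plugE F (Shift b))"

definition ctx_equiv :: "trm \<Rightarrow> trm \<Rightarrow> bool" where
  "ctx_equiv t0 t1 \<longleftrightarrow>
    (\<forall>C. wf_ctx C \<and> fv (plugC C t0) = {} \<and> fv (plugC C t1) = {} \<longrightarrow>
      ((\<exists>v0. eval (plugC C t0) v0 \<and> is_val v0) \<longrightarrow> (\<exists>v1. eval (plugC C t1) v1 \<and> is_val v1)) \<and>
      ((\<exists>u0. eval (plugC C t0) u0 \<and> control_stuck u0) \<longrightarrow> (\<exists>u1. eval (plugC C t1) u1 \<and> control_stuck u1)) \<and>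
      ((\<exists>v1. eval (plugC C t1) v1 \<and> is_val v1) \<longrightarrow> (\<exists>v0. eval (plugC C t0) v0 \<and> is_val v0)) \<and>
      ((\<exists>u1. eval (plugC C t1) u1 \<and> control_stuck u1) \<longrightarrow> (\<exists>u0. eval (plugC C t0) u0 \<and> control_stuck u0)))"

definition ctx_rel :: "(trm \<Rightarrow> trm \<Rightarrow> bool) \<Rightarrow> ectx \<Rightarrow> ectx \<Rightarrow> bool" where
  "ctx_rel R E0 E1 \<longleftrightarrow>
    (\<exists>E0' F0 E1' F1 x. E0 = compE E0' (Rst F0) \<and> E1 = compE E1' (Rst F1) \<and>
        pure F0 \<and> pure F1 \<and> x \<notin> fvE E0 \<union> fvE E1 \<and>
        R (plugE E0' (FV x)) (plugE E1' (FV x)) \<and>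
        R (Reset (plugE F0 (FV x))) (Reset (plugE F1 (FV x))))
    \<or> (pure E0 \<and> pure E1 \<and>
        (\<exists>x. x \<notin> fvE E0 \<union> fvE E1 \<and> R (plugE E0 (FV x)) (plugE E1 (FV x))))"

fun app_at :: "trm \<Rightarrow> var \<Rightarrow> trm" where
  "app_at (FV x) y = App (FV x) (FV y)"
| "app_at (Lam b) y = opn b (FV y)"
| "app_at t y = App t (FV y)"

definition val_rel :: "(trm \<Rightarrow> trm \<Rightarrow> bool) \<Rightarrow> trm \<Rightarrow> trm \<Rightarrow> bool" where
  "val_rel R v0 v1 \<longleftrightarrow> is_val v0 \<and> is_val v1 \<and>
     (\<exists>x. x \<notin> fv v0 \<union> fv v1 \<and> R (app_at v0 x) (app_at v1 x))"

definition nf_rel :: "(trm \<Rightarrow> trm \<Rightarrow> bool) \<Rightarrow> trm \<Rightarrow> trm \<Rightarrow> bool" where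
  "nf_rel R t0 t1 \<longleftrightarrow>
     val_rel R t0 t1
   \<or> (\<exists>F0 F1 b0 b1 k. pure F0 \<and> pure F1 \<and>
        t0 = plugE F0 (Shift b0) \<and> t1 = plugE F1 (Shift b1) \<and>
        ctx_rel R F0 F1 \<and> k \<notin> fv t0 \<union> fv t1 \<and>
        R (Reset (opn b0 (FV k))) (Reset (opn b1 (FV k))))
   \<or> (\<exists>E0 E1 x v0 v1. evctx E0 \<and> evctx E1 \<and>
        t0 = plugE E0 (App (FV x) v0) \<and> t1 = plugE E1 (App (FV x) v1) \<and>
        ctx_rel R E0 E1 \<and> val_rel R v0 v1)"

definition nf_sim :: "(trm \<Rightarrow> trm \<Rightarrow> bool) \<Rightarrow> bool" where
  "nf_sim R \<longleftrightarrow> (\<forall>t0 t1 t0'. R t0 t1 \<and> eval t0 t0' \<longrightarrow>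
      (\<exists>t1'. eval t1 t1' \<and> nf_rel R t0' t1'))"

definition nf_bisim :: "(trm \<Rightarrow> trm \<Rightarrow> bool) \<Rightarrow> bool" where
  "nf_bisim R \<longleftrightarrow> (\<forall>t0 t1. R t0 t1 \<longrightarrow> lc t0 \<and> lc t1) \<and>
      nf_sim R \<and> nf_sim (\<lambda>t1 t0. R t0 t1)"

definition nf_bisimilar :: "trm \<Rightarrow> trm \<Rightarrow> bool" where
  "nf_bisimilar t0 t1 \<longleftrightarrow> (\<exists>R. nf_bisim R \<and> R t0 t1)"

end

theory Submission
  imports Defs
begin

text \<open>A step-indexed logical relation argument. Closed terms are related at index \<open>k\<close> when
  every normal form that the left one reaches within \<open>j \<le> k\<close> steps is matched by a normal
  form of the right one, related at index \<open>k - j\<close>; related normal forms are either two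
  abstractions mapping related values to related terms, or two control-stuck terms with related
  pure contexts and related shift bodies. Closed under related substitutions of values for free
  variables, this relation is a congruence, hence preserved by all contexts, and it is adequate:
  related closed terms evaluate to values, resp. control-stuck terms, together.

  It remains to show that a normal form bisimulation \<open>R\<close> is contained in the relation. This is
  an induction on the index, simultaneously for \<open>R\<close> and for its clause on values: evaluate the
  left term and use the bisimulation clause for the normal form reached. For an open stuck term
  \<open>E[x v]\<close>, the substitution replaces \<open>x\<close> by an abstraction, so the term takes a
  \<open>\<beta>\<close>-step and the remaining obligations live at smaller indices.\<close>

section \<open>Substitutions and evaluation contexts\<close>

fun msubst :: "(var \<Rightarrow> trm) \<Rightarrow> trm \<Rightarrow> trm" where
  "msubst s (BV i) = BV i"
| "msubst s (FV x) = s x"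
| "msubst s (Lam t) = Lam (msubst s t)"
| "msubst s (App t u) = App (msubst s t) (msubst s u)"
| "msubst s (Shift t) = Shift (msubst s t)"
| "msubst s (Reset t) = Reset (msubst s t)"

fun msubstE :: "(var \<Rightarrow> trm) \<Rightarrow> ectx \<Rightarrow> ectx" where
  "msubstE s Hole = Hole"
| "msubstE s (ApR v E) = ApR (msubst s v) (msubstE s E)"
| "msubstE s (ApL E t) = ApL (msubstE s E) (msubst s t)"
| "msubstE s (Rst E) = Rst (msubstE s E)"

definition val_subst :: "(var \<Rightarrow> trm) \<Rightarrow> bool" where
  "val_subst s \<longleftrightarrow> (\<forall>x. lc (s x) \<and> is_val (s x))"

definition closed :: "trm \<Rightarrow> bool" where
  "closed t \<longleftrightarrow> lc t \<and> fv t = {}"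

lemma finite_fv [simp]: "finite (fv t)"
  by (induction t) auto

lemma finite_fvE [simp]: "finite (fvE E)"
  by (induction E) auto

lemma lc_at_mono: "lc_at k t \<Longrightarrow> k \<le> k' \<Longrightarrow> lc_at k' t"
  by (induction t arbitrary: k k') auto

lemma open_lc: "lc_at k t \<Longrightarrow> k \<le> j \<Longrightarrow> open_at j u t = t"
  by (induction t arbitrary: k j) auto

lemma open_lc0 [simp]: "lc t \<Longrightarrow> open_at j u t = t"
  using open_lc by blast

lemma lc_open: "lc_at (Suc k) t \<Longrightarrow> lc u \<Longrightarrow> lc_at k (open_at k u t)"
  by (induction t arbitrary: k) (auto intro: lc_at_mono)

lemma lc_open_FV_iff: "lc_at k (open_at k (FV z) b) \<longleftrightarrow> lc_at (Suc k) b"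
  by (induction b arbitrary: k) auto

lemma fv_open: "fv (open_at k u t) \<subseteq> fv t \<union> fv u"
  by (induction t arbitrary: k) auto

lemma size_open_FV [simp]: "size (open_at k (FV x) t) = size t"
  by (induction t arbitrary: k) auto

lemma close_fresh: "x \<notin> fv t \<Longrightarrow> close_at k x t = t"
  by (induction t arbitrary: k) auto

lemma close_open: "x \<notin> fv b \<Longrightarrow> close_at k x (open_at k (FV x) b) = b"
  by (induction b arbitrary: k) auto

lemma lc_close: "lc_at k t \<Longrightarrow> lc_at (Suc k) (close_at k x t)"
  by (induction t arbitrary: k) auto

lemma fv_close: "fv (close_at k x t) = fv t - {x}"
  by (induction t arbitrary: k) auto

lemma lc_lam: "lc t \<Longrightarrow> lc (lam x t)"
  unfolding lam_def by (simp add: lc_close)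

lemma lc_shift: "lc t \<Longrightarrow> lc (shift x t)"
  unfolding shift_def by (simp add: lc_close)

lemma fv_lam: "fv (lam x t) = fv t - {x}"
  unfolding lam_def by (simp add: fv_close)

lemma fv_shift: "fv (shift x t) = fv t - {x}"
  unfolding shift_def by (simp add: fv_close)

lemma Lam_eq_lam: "y \<notin> fv b \<Longrightarrow> Lam b = lam y (opn b (FV y))"
  unfolding lam_def by (simp add: close_open)

lemma Shift_eq_shift: "y \<notin> fv b \<Longrightarrow> Shift b = shift y (opn b (FV y))"
  unfolding shift_def by (simp add: close_open)

lemma msubst_lc: "lc_at k t \<Longrightarrow> val_subst s \<Longrightarrow> lc_at k (msubst s t)"
  by (induction t arbitrary: k) (auto simp: val_subst_def intro: lc_at_mono)

lemma msubst_open: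
  "val_subst s \<Longrightarrow> msubst s (open_at k u t) = open_at k (msubst s u) (msubst s t)"
  by (induction t arbitrary: k) (auto simp: val_subst_def open_lc)

lemma msubst_cong: "(\<And>x. x \<in> fv t \<Longrightarrow> s x = s' x) \<Longrightarrow> msubst s t = msubst s' t"
  by (induction t) auto

lemma msubstE_cong: "(\<And>x. x \<in> fvE E \<Longrightarrow> s x = s' x) \<Longrightarrow> msubstE s E = msubstE s' E"
  by (induction E) (auto intro: msubst_cong)

lemma msubst_FV [simp]: "msubst FV t = t"
  by (induction t) auto

lemma fv_msubst: "fv (msubst s t) = (\<Union>x\<in>fv t. fv (s x))"
  by (induction t) auto

lemma fvE_msubstE: "fvE (msubstE s E) = (\<Union>x\<in>fvE E. fv (s x))"
  by (induction E) (auto simp: fv_msubst)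

lemma is_val_msubst: "is_val v \<Longrightarrow> val_subst s \<Longrightarrow> is_val (msubst s v)"
  by (cases v) (auto simp: val_subst_def)

lemma open_msubst_close:
  "lc_at k t \<Longrightarrow> (\<And>x. lc (s x)) \<Longrightarrow> lc u \<Longrightarrow>
   open_at k u (msubst s (close_at k x t)) = msubst (s(x := u)) t"
  by (induction t arbitrary: k) (auto simp: open_lc)

lemma msubst_upd_open:
  assumes "val_subst s" and "z \<notin> fv b"
  shows "msubst (s(z := u)) (opn b (FV z)) = opn (msubst s b) u"
proof -
  have "open_at k u (msubst s b) = msubst (s(z := u)) (open_at k (FV z) b)" for k
    using assms by (induction b arbitrary: k) (auto simp: val_subst_def open_lc)
  then show ?thesis by simp
qed

lemma closed_msubst:
  assumes "val_subst s" and "lc t" and "\<And>x. x \<in> fv t \<Longrightarrow> fv (s x) = {}"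
  shows "closed (msubst s t)"
  using assms by (auto simp: closed_def fv_msubst intro: msubst_lc)

lemma plugE_compE: "plugE (compE E E') t = plugE E (plugE E' t)"
  by (induction E) auto

lemma evctx_compE [simp]: "evctx (compE E E') \<longleftrightarrow> evctx E \<and> evctx E'"
  by (induction E) auto

lemma pure_compE [simp]: "pure (compE E E') \<longleftrightarrow> pure E \<and> pure E'"
  by (induction E) auto

lemma fvE_compE [simp]: "fvE (compE E E') = fvE E \<union> fvE E'"
  by (induction E) auto

lemma msubstE_compE: "msubstE s (compE E E') = compE (msubstE s E) (msubstE s E')"
  by (induction E) auto

lemma msubst_plugE: "msubst s (plugE E t) = plugE (msubstE s E) (msubst s t)"
  by (induction E) auto

lemma msubst_upd_plugE:
  assumes "x \<notin> fvE E"
  shows "msubst (s(x := w)) (plugE E (FV x)) = plugE (msubstE s E) w"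
proof -
  from assms have "msubstE (s(x := w)) E = msubstE s E"
    by (intro msubstE_cong) auto
  then show ?thesis by (simp add: msubst_plugE)
qed

lemma fv_plugE: "fv (plugE E t) = fvE E \<union> fv t"
  by (induction E) auto

lemma pure_evctx: "pure F \<Longrightarrow> evctx F"
  by (induction F) auto

lemma pure_msubstE: "pure F \<Longrightarrow> val_subst s \<Longrightarrow> pure (msubstE s F)"
  by (induction F) (auto simp: is_val_msubst msubst_lc)

lemma evctx_msubstE: "evctx E \<Longrightarrow> val_subst s \<Longrightarrow> evctx (msubstE s E)"
  by (induction E) (auto simp: is_val_msubst msubst_lc)

lemma open_plugE: "evctx E \<Longrightarrow> open_at k u (plugE E t) = plugE E (open_at k u t)"
  by (induction E) auto

lemma close_plugE:
  "evctx E \<Longrightarrow> x \<notin> fvE E \<Longrightarrow> close_at k x (plugE E (FV x)) = plugE E (BV k)"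
  by (induction E) (auto simp: close_fresh)

lemma lc_plugE_BV: "evctx E \<Longrightarrow> lc_at k (plugE E (BV i)) \<longleftrightarrow> i < k"
  by (induction E) (auto intro: lc_at_mono)

lemma lc_plugE: "evctx E \<Longrightarrow> lc_at k t \<Longrightarrow> lc_at k (plugE E t)"
  by (induction E) (auto intro: lc_at_mono)

lemma lc_plugE_hole: "lc_at k (plugE E t) \<Longrightarrow> lc_at k t"
  by (induction E) auto

lemma closed_plugE: "evctx E \<Longrightarrow> fvE E = {} \<Longrightarrow> closed t \<Longrightarrow> closed (plugE E t)"
  unfolding closed_def by (auto simp: fv_plugE intro: lc_plugE)

lemma control_not_val [simp]: "pure F \<Longrightarrow> is_val (plugE F (Shift b)) \<longleftrightarrow> False"
  by (cases F) auto

lemma control_neq_Lam [simp]: "plugE F (Shift b) \<noteq> Lam c"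
  by (cases F) auto

lemma Lam_neq_control [simp]: "Lam c \<noteq> plugE F (Shift b)"
  by (cases F) auto

lemma FV_neq_control [simp]: "FV x \<noteq> plugE F (Shift b)"
  by (cases F) auto

lemma FV_neq_plugE_App [simp]: "FV x \<noteq> plugE E (App t u)"
  by (cases E) auto

lemma control_neq_Reset [simp]: "pure F \<Longrightarrow> plugE F (Shift b) \<noteq> Reset c"
  by (cases F) auto

lemma plugE_control_inject:
  "pure F \<Longrightarrow> pure F' \<Longrightarrow> plugE F (Shift b) = plugE F' (Shift b') \<Longrightarrow> F = F' \<and> b = b'"
proof (induction F arbitrary: F')
  case Hole
  then show ?case by (cases F') auto
next
  case (ApR v F)
  then show ?case by (cases F') auto
next
  case (ApL F s)
  then show ?case by (cases F') auto
qed auto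

section \<open>Structural reduction\<close>

text \<open>Reduction given by congruence rules instead of evaluation contexts; it coincides with
  \<open>red\<close> by \<open>red_eq_rd\<close>.\<close>

inductive rd :: "trm \<Rightarrow> trm \<Rightarrow> bool" where
  rd_beta: "lc (Lam b) \<Longrightarrow> is_val v \<Longrightarrow> lc v \<Longrightarrow> rd (App (Lam b) v) (opn b v)"
| rd_reset: "is_val v \<Longrightarrow> lc v \<Longrightarrow> rd (Reset v) v"
| rd_shift: "pure F \<Longrightarrow> lc (plugE F (Shift b)) \<Longrightarrow>
    rd (Reset (plugE F (Shift b))) (Reset (opn b (Lam (Reset (plugE F (BV 0))))))"
| rd_appL: "rd t t' \<Longrightarrow> lc u \<Longrightarrow> rd (App t u) (App t' u)"
| rd_appR: "is_val v \<Longrightarrow> lc v \<Longrightarrow> rd t t' \<Longrightarrow> rd (App v t) (App v t')"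
| rd_Reset: "rd t t' \<Longrightarrow> rd (Reset t) (Reset t')"

abbreviation nf :: "trm \<Rightarrow> bool" where
  "nf t \<equiv> \<not> (\<exists>t'. rd t t')"

lemma rd_plugE: "evctx E \<Longrightarrow> rd t t' \<Longrightarrow> rd (plugE E t) (plugE E t')"
  by (induction E) (auto intro: rd.intros)

lemma lam_reset_plugE:
  "pure F \<Longrightarrow> x \<notin> fvE F \<Longrightarrow> lam x (Reset (plugE F (FV x))) = Lam (Reset (plugE F (BV 0)))"
  by (simp add: lam_def close_plugE pure_evctx)

lemma red_imp_rd: "red t t' \<Longrightarrow> rd t t'"
proof (induction rule: red.induct)
  case (beta E v b)
  then show ?case
    using lc_plugE_hole[of 0 E "App (Lam b) v"] by (auto intro!: rd_plugE rd.intros)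
next
  case (shift E F x b)
  then have "lc (plugE F (Shift b))"
    using lc_plugE_hole[of 0 E "Reset (plugE F (Shift b))"] by auto
  with shift show ?case
    by (auto simp: lam_reset_plugE intro!: rd_plugE rd_shift)
next
  case (reset E v)
  then show ?case
    using lc_plugE_hole[of 0 E "Reset v"] by (auto intro!: rd_plugE rd.intros)
qed

lemma red_in_evctx:
  assumes "red t t'" and "evctx E"
  shows "red (plugE E t) (plugE E t')"
  using assms(1)
proof (induction rule: red.induct)
  case (beta E' v b)
  then show ?case
    using assms(2) red.beta[of "compE E E'" v b] by (simp add: plugE_compE lc_plugE)
next
  case (shift E' F x b)
  then show ?case
    using assms(2) red.shift[of "compE E E'" F x b] by (simp add: plugE_compE lc_plugE)
next
  case (reset E' v)
  then show ?case
    using assms(2) red.reset[of "compE E E'" v] by (simp add: plugE_compE lc_plugE)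
qed

lemma rd_imp_red: "rd t t' \<Longrightarrow> red t t'"
proof (induction rule: rd.induct)
  case (rd_beta b v)
  then show ?case using red.beta[of Hole v b] by auto
next
  case (rd_reset v)
  then show ?case using red.reset[of Hole v] by auto
next
  case (rd_shift F b)
  obtain x where "x \<notin> fvE F"
    using finite_fvE ex_new_if_finite infinite_UNIV_nat by blast
  with rd_shift show ?case
    using red.shift[of Hole F x b] by (auto simp: lam_reset_plugE)
next
  case (rd_appL t t' u)
  then show ?case using red_in_evctx[of t t' "ApL Hole u"] by simp
next
  case (rd_appR v t t')
  then show ?case using red_in_evctx[of t t' "ApR v Hole"] by simp
next
  case (rd_Reset t t')
  then show ?case using red_in_evctx[of t t' "Rst Hole"] by simp
qed

lemma red_eq_rd: "red = rd"
  using red_imp_rd rd_imp_red by (intro ext) blast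

lemma eval_iff: "eval s n \<longleftrightarrow> rd\<^sup>*\<^sup>* s n \<and> nf n"
  by (simp add: eval_def irreducible_def red_eq_rd)

lemma val_nf: "is_val v \<Longrightarrow> nf v"
  by (cases v) (auto elim: rd.cases)

lemma control_nf: "pure F \<Longrightarrow> nf (plugE F (Shift b))"
proof (induction F)
  case (ApR v F)
  then show ?case
    by (auto elim!: rd.cases[of "App v (plugE F (Shift b))"] dest: val_nf)
next
  case (ApL F s)
  then show ?case
    by (auto elim!: rd.cases[of "App (plugE F (Shift b)) s"])
qed (auto elim: rd.cases)

lemma rd_AppE:
  assumes "rd (App t u) r"
  obtains (beta) b where "t = Lam b" "is_val u" "r = opn b u"
  | (left) t' where "rd t t'" "r = App t' u"
  | (right) u' where "is_val t" "rd u u'" "r = App t u'"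
  using assms by (cases rule: rd.cases) auto

lemma rd_ResetE:
  assumes "rd (Reset t) r"
  obtains (val) "is_val t" "r = t"
  | (shift) F b where "pure F" "t = plugE F (Shift b)"
      "r = Reset (opn b (Lam (Reset (plugE F (BV 0)))))"
  | (inner) t' where "rd t t'" "r = Reset t'"
  using assms by (cases rule: rd.cases) auto

lemma rd_deterministic: "rd t t1 \<Longrightarrow> rd t t2 \<Longrightarrow> t1 = t2"
proof (induction t arbitrary: t1 t2)
  case (App t u)
  from App.prems(1) show ?case
  proof (cases rule: rd_AppE)
    case beta
    from App.prems(2) show ?thesis
      by (cases rule: rd_AppE) (use beta val_nf in auto)
  next
    case left
    from App.prems(2) show ?thesis
      by (cases rule: rd_AppE) (use left App.IH(1) val_nf in auto)
  next
    case right
    from App.prems(2) show ?thesis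
      by (cases rule: rd_AppE) (use right App.IH(2) val_nf in auto)
  qed
next
  case (Reset t)
  from Reset.prems(1) show ?case
  proof (cases rule: rd_ResetE)
    case val
    from Reset.prems(2) show ?thesis
      by (cases rule: rd_ResetE) (use val val_nf in auto)
  next
    case (shift F b)
    from Reset.prems(2) show ?thesis
    proof (cases rule: rd_ResetE)
      case (shift F' b')
      with \<open>pure F\<close> \<open>t = plugE F (Shift b)\<close> \<open>t1 = _\<close> show ?thesis
        using plugE_control_inject[of F F' b b'] by simp
    qed (use shift control_nf in auto)
  next
    case inner
    from Reset.prems(2) show ?thesis
    proof (cases rule: rd_ResetE)
      case shift
      then show ?thesis using inner control_nf by blast
    qed (use inner Reset.IH val_nf in auto)
  qed
qed (auto elim: rd.cases)

lemma rd_lc: "rd t t' \<Longrightarrow> lc t \<and> lc t'"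
  by (induction rule: rd.induct)
    (auto intro!: lc_open simp: lc_plugE_BV pure_evctx lc_plugE dest: lc_plugE_hole)

lemma rd_fv: "rd t t' \<Longrightarrow> fv t' \<subseteq> fv t"
proof (induction rule: rd.induct)
  case (rd_beta b v)
  then show ?case using fv_open[of 0 v b] by auto
next
  case (rd_shift F b)
  then show ?case
    using fv_open[of 0 "Lam (Reset (plugE F (BV 0)))" b] by (auto simp: fv_plugE)
qed auto

lemma rd_msubst: "rd t t' \<Longrightarrow> val_subst s \<Longrightarrow> rd (msubst s t) (msubst s t')"
proof (induction rule: rd.induct)
  case (rd_beta b v)
  then have "lc (Lam (msubst s b))"
    using msubst_lc[of 0 "Lam b" s] by simp
  with rd_beta show ?case
    by (auto simp: msubst_open is_val_msubst msubst_lc intro!: rd.rd_beta)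
next
  case (rd_shift F b)
  then have "rd (Reset (plugE (msubstE s F) (Shift (msubst s b))))
      (Reset (opn (msubst s b) (Lam (Reset (plugE (msubstE s F) (BV 0))))))"
    using msubst_lc[of 0 "plugE F (Shift b)" s]
    by (intro rd.rd_shift) (auto simp: pure_msubstE msubst_plugE)
  with rd_shift show ?case by (simp add: msubst_plugE msubst_open)
qed (auto simp: is_val_msubst msubst_lc intro: rd.intros)

abbreviation answer :: "trm \<Rightarrow> bool" where
  "answer t \<equiv> (\<exists>b. t = Lam b) \<or> (\<exists>F b. pure F \<and> t = plugE F (Shift b))"

lemma progress_App:
  assumes "closed t" "closed u" "answer t \<or> \<not> nf t" "answer u \<or> \<not> nf u"
  shows "answer (App t u) \<or> \<not> nf (App t u)"
proof -
  have lc: "lc t" "lc u" using assms(1,2) by (auto simp: closed_def)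
  consider (Lam) b where "t = Lam b" | (control) F b where "pure F" "t = plugE F (Shift b)"
    | (red) "\<not> nf t"
    using assms(3) by blast
  then show ?thesis
  proof cases
    case (Lam b)
    consider c where "u = Lam c" | (control) F c where "pure F" "u = plugE F (Shift c)"
      | (red) "\<not> nf u"
      using assms(4) by blast
    then show ?thesis
    proof cases
      case 1
      then show ?thesis using Lam lc rd_beta[of b u] by auto
    next
      case (control F c)
      then show ?thesis using Lam lc by (intro disjI1 disjI2 exI[of _ "ApR t F"]) auto
    next
      case red
      then obtain u' where "rd u u'" by blast
      with Lam lc have "rd (App t u) (App t u')" by (auto intro: rd_appR)
      then show ?thesis by blast
    qed
  next
    case (control F b)
    then show ?thesis using lc by (intro disjI1 disjI2 exI[of _ "ApL F u"]) auto
  next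
    case red
    then obtain t' where "rd t t'" by blast
    with lc have "rd (App t u) (App t' u)" by (simp add: rd_appL)
    then show ?thesis by blast
  qed
qed

lemma progress_Reset:
  assumes "closed t" "answer t \<or> \<not> nf t"
  shows "\<not> nf (Reset t)"
proof -
  have "lc t" using assms(1) by (simp add: closed_def)
  consider b where "t = Lam b" | F b where "pure F" "t = plugE F (Shift b)" | t' where "rd t t'"
    using assms(2) by blast
  then show ?thesis
  proof cases
    case 1
    then show ?thesis using \<open>lc t\<close> rd_reset[of t] by auto
  next
    case (2 F b)
    then show ?thesis using \<open>lc t\<close> rd_shift[of F b] by auto
  next
    case (3 t')
    then show ?thesis using rd_Reset by blast
  qed
qed

lemma closed_progress: "closed t \<Longrightarrow> answer t \<or> \<not> nf t"
proof (induction t)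
  case (App t u)
  then show ?case using progress_App by (simp add: closed_def)
next
  case (Reset t)
  then show ?case using progress_Reset by (simp add: closed_def)
next
  case (Shift t)
  then show ?case by (intro disjI1 disjI2 exI[of _ Hole]) auto
qed (auto simp: closed_def)

lemma closed_nf_cases: "closed t \<Longrightarrow> nf t \<Longrightarrow> answer t"
  using closed_progress by blast

lemma relpowp_map:
  assumes "\<And>x y. r x y \<Longrightarrow> r' (f x) (f y)"
  shows "(r ^^ n) x y \<Longrightarrow> (r' ^^ n) (f x) (f y)"
proof (induction n arbitrary: x)
  case (Suc n)
  from Suc.prems obtain z where "r x z" and "(r ^^ n) z y"
    by (rule relpowp_Suc_E2)
  with Suc.IH assms show ?case by (blast intro: relpowp_Suc_I2)
qed simp

lemma rtranclp_map:
  assumes "\<And>x y. r x y \<Longrightarrow> r' (f x) (f y)"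
  shows "r\<^sup>*\<^sup>* x y \<Longrightarrow> r'\<^sup>*\<^sup>* (f x) (f y)"
  by (induction rule: rtranclp_induct) (auto intro: rtranclp.rtrancl_into_rtrancl assms)

lemma relpowp_rd_msubst: "(rd ^^ j) s m \<Longrightarrow> val_subst g \<Longrightarrow> (rd ^^ j) (msubst g s) (msubst g m)"
  using relpowp_map[of rd rd "msubst g"] rd_msubst by blast

lemma rtranclp_rd_msubst: "rd\<^sup>*\<^sup>* s m \<Longrightarrow> val_subst g \<Longrightarrow> rd\<^sup>*\<^sup>* (msubst g s) (msubst g m)"
  using rtranclp_map[of rd rd "msubst g"] rd_msubst by blast

lemma relpowp_rd_open_inst:
  assumes "(rd ^^ j) (opn a (FV z)) (plugE E (App (FV y) v))"
    and "val_subst g" "val_subst (g(z := u))" "z \<notin> fv a" "y \<noteq> z"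
  shows "(rd ^^ j) (opn (msubst g a) u) (plugE (msubstE (g(z := u)) E) (App (g y) (msubst (g(z := u)) v)))"
  using relpowp_rd_msubst[OF assms(1,3)] assms(2,4,5) by (simp add: msubst_upd_open msubst_plugE)

lemma relpowp_rd_Suc: "rd s s' \<Longrightarrow> (rd ^^ Suc j) s n \<Longrightarrow> (rd ^^ j) s' n"
  by (metis relpowp_Suc_E2 rd_deterministic)

lemma relpowp_rd_from_nf: "(rd ^^ j) s n \<Longrightarrow> nf s \<Longrightarrow> j = 0 \<and> n = s"
  by (metis relpowp_Suc_D2 relpowp_0_E not0_implies_Suc)

lemma rtranclp_rd_to_nf: "rd\<^sup>*\<^sup>* s n \<Longrightarrow> nf n \<Longrightarrow> rd s s' \<Longrightarrow> rd\<^sup>*\<^sup>* s' n"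
  by (metis converse_rtranclpE rd_deterministic)

lemma relpowp_rd_prefix:
  "(rd ^^ i) s m \<Longrightarrow> (rd ^^ j) s n \<Longrightarrow> nf n \<Longrightarrow> i \<le> j \<and> (rd ^^ (j - i)) m n"
proof (induction i arbitrary: s j)
  case (Suc i)
  from Suc.prems(1) obtain s' where "rd s s'" and "(rd ^^ i) s' m"
    by (rule relpowp_Suc_E2)
  moreover from Suc.prems(2,3) \<open>rd s s'\<close> obtain j' where "j = Suc j'"
    by (cases j) auto
  ultimately show ?case
    using Suc.IH[of s' j'] Suc.prems(2,3) relpowp_rd_Suc by auto
qed simp

lemma relpowp_rd_decompose:
  assumes lift: "\<And>s s'. rd s s' \<Longrightarrow> rd (f s) (f s')"
  shows "(rd ^^ j) (f s) n \<Longrightarrow> nf n \<Longrightarrow>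
    \<exists>j1 m. j1 \<le> j \<and> (rd ^^ j1) s m \<and> nf m \<and> (rd ^^ (j - j1)) (f m) n"
proof (induction j arbitrary: s)
  case 0
  then show ?case using lift by (intro exI[of _ 0]) fastforce
next
  case (Suc j)
  show ?case
  proof (cases "nf s")
    case True
    with Suc.prems show ?thesis by (intro exI[of _ 0]) auto
  next
    case False
    then obtain s' where s': "rd s s'" by blast
    with Suc.prems(1) lift have "(rd ^^ j) (f s') n"
      by (blast intro: relpowp_rd_Suc)
    with Suc.IH Suc.prems(2) obtain j1 m where
      "j1 \<le> j" "(rd ^^ j1) s' m" "nf m" "(rd ^^ (j - j1)) (f m) n"
      by blast
    moreover from s' \<open>(rd ^^ j1) s' m\<close> have "(rd ^^ Suc j1) s m"
      by (rule relpowp_Suc_I2)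
    ultimately show ?thesis
      by (intro exI[of _ "Suc j1"] exI[of _ m]) auto
  qed
qed

lemma rtranclp_rd_lc: "rd\<^sup>*\<^sup>* s n \<Longrightarrow> lc s \<Longrightarrow> lc n"
  by (induction rule: rtranclp_induct) (auto dest: rd_lc)

lemma rtranclp_rd_fv: "rd\<^sup>*\<^sup>* s n \<Longrightarrow> fv n \<subseteq> fv s"
  by (induction rule: rtranclp_induct) (auto dest: rd_fv)

lemma rd_beta_closed: "closed (Lam b) \<Longrightarrow> closed v \<Longrightarrow> is_val v \<Longrightarrow> rd (App (Lam b) v) (opn b v)"
  by (simp add: closed_def rd_beta)

lemma closed_rd: "rd s s' \<Longrightarrow> closed s \<Longrightarrow> closed s'"
  unfolding closed_def using rd_lc rd_fv by blast

lemma closed_Reset_not_nf: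
  assumes "closed s"
  shows "\<not> nf (Reset s)"
proof
  assume "nf (Reset s)"
  moreover have "closed (Reset s)" using assms by (simp add: closed_def)
  ultimately obtain F b where "pure F" "Reset s = plugE F (Shift b)"
    using closed_nf_cases by blast
  then show False using control_neq_Reset by metis
qed

lemma relpowp_closed_Reset_val:
  "(rd ^^ j) (Reset s) n \<Longrightarrow> nf n \<Longrightarrow> closed s \<Longrightarrow> is_val n"
proof (induction j arbitrary: s)
  case 0
  then show ?case using closed_Reset_not_nf by auto
next
  case (Suc j)
  from Suc.prems(1) obtain r where r: "rd (Reset s) r" "(rd ^^ j) r n"
    by (rule relpowp_Suc_E2)
  have "closed (Reset s)" using Suc.prems(3) by (simp add: closed_def)
  with r(1) have "closed r" by (rule closed_rd)
  from r(1) show ?case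
  proof (cases rule: rd_ResetE)
    case val
    then show ?thesis using r(2) Suc.prems(2) val_nf relpowp_rd_from_nf by blast
  next
    case shift
    then show ?thesis using Suc.IH r(2) Suc.prems(2) \<open>closed r\<close> by (auto simp: closed_def)
  next
    case inner
    then show ?thesis using Suc.IH r(2) Suc.prems(2) \<open>closed r\<close> by (auto simp: closed_def)
  qed
qed

section \<open>The step-indexed logical relation\<close>

text \<open>Only the reduction steps of the left-hand term are counted, and the right-hand term
  may take any number of steps; the index of \<open>lr_nf\<close> bounds the number of future steps
  of the left-hand side. The clause for \<open>Suc k\<close> contains \<open>lr_tm k\<close> and \<open>lr_ctx k\<close>
  unfolded (see \<open>lr_nf_Suc\<close>), as these are defined from \<open>lr_nf\<close>.\<close>

fun lr_nf :: "nat \<Rightarrow> trm \<Rightarrow> trm \<Rightarrow> bool" where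
  "lr_nf 0 n0 n1 \<longleftrightarrow> closed n0 \<and> closed n1 \<and> ((\<exists>b0 b1. n0 = Lam b0 \<and> n1 = Lam b1) \<or>
     (\<exists>F0 b0 F1 b1. pure F0 \<and> pure F1 \<and> n0 = plugE F0 (Shift b0) \<and> n1 = plugE F1 (Shift b1)))"
| "lr_nf (Suc k) n0 n1 \<longleftrightarrow> lr_nf k n0 n1 \<and>
   (\<forall>b0 b1 u0 u1. n0 = Lam b0 \<longrightarrow> n1 = Lam b1 \<longrightarrow> lr_nf k u0 u1 \<longrightarrow> is_val u0 \<longrightarrow> is_val u1 \<longrightarrow>
       (\<forall>j n. j \<le> k \<longrightarrow> (rd ^^ j) (opn b0 u0) n \<longrightarrow> nf n \<longrightarrow>
          (\<exists>n1. rd\<^sup>*\<^sup>* (opn b1 u1) n1 \<and> nf n1 \<and> lr_nf (k - j) n n1))) \<and>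
   (\<forall>F0 b0 F1 b1. pure F0 \<longrightarrow> pure F1 \<longrightarrow> n0 = plugE F0 (Shift b0) \<longrightarrow> n1 = plugE F1 (Shift b1) \<longrightarrow>
     (\<forall>v0 v1. lr_nf k v0 v1 \<longrightarrow> is_val v0 \<longrightarrow> is_val v1 \<longrightarrow>
       (\<forall>j n. j \<le> k \<longrightarrow> (rd ^^ j) (plugE F0 v0) n \<longrightarrow> nf n \<longrightarrow>
          (\<exists>n1. rd\<^sup>*\<^sup>* (plugE F1 v1) n1 \<and> nf n1 \<and> lr_nf (k - j) n n1))) \<and>
     (\<forall>c0 c1. lr_nf k c0 c1 \<longrightarrow> is_val c0 \<longrightarrow> is_val c1 \<longrightarrow>
       (\<forall>j n. j \<le> k \<longrightarrow> (rd ^^ j) (Reset (opn b0 c0)) n \<longrightarrow> nf n \<longrightarrow>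
          (\<exists>n1. rd\<^sup>*\<^sup>* (Reset (opn b1 c1)) n1 \<and> nf n1 \<and> lr_nf (k - j) n n1))))"

definition lr_tm :: "nat \<Rightarrow> trm \<Rightarrow> trm \<Rightarrow> bool" where
  "lr_tm k s0 s1 \<longleftrightarrow> (\<forall>j n. j \<le> k \<longrightarrow> (rd ^^ j) s0 n \<longrightarrow> nf n \<longrightarrow>
     (\<exists>n1. rd\<^sup>*\<^sup>* s1 n1 \<and> nf n1 \<and> lr_nf (k - j) n n1))"

definition lr_ctx :: "nat \<Rightarrow> ectx \<Rightarrow> ectx \<Rightarrow> bool" where
  "lr_ctx k F0 F1 \<longleftrightarrow> (\<forall>v0 v1. lr_nf k v0 v1 \<longrightarrow> is_val v0 \<longrightarrow> is_val v1 \<longrightarrow>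
     lr_tm k (plugE F0 v0) (plugE F1 v1))"

definition lr_rctx :: "nat \<Rightarrow> ectx \<Rightarrow> ectx \<Rightarrow> bool" where
  "lr_rctx k F0 F1 \<longleftrightarrow> (\<forall>v0 v1. lr_nf k v0 v1 \<longrightarrow> is_val v0 \<longrightarrow> is_val v1 \<longrightarrow>
     lr_tm k (Reset (plugE F0 v0)) (Reset (plugE F1 v1)))"

lemma lr_nf_Suc: "lr_nf (Suc k) n0 n1 \<longleftrightarrow> lr_nf k n0 n1 \<and>
   (\<forall>b0 b1 u0 u1. n0 = Lam b0 \<longrightarrow> n1 = Lam b1 \<longrightarrow> lr_nf k u0 u1 \<longrightarrow> is_val u0 \<longrightarrow> is_val u1 \<longrightarrow>
       lr_tm k (opn b0 u0) (opn b1 u1)) \<and>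
   (\<forall>F0 b0 F1 b1. pure F0 \<longrightarrow> pure F1 \<longrightarrow> n0 = plugE F0 (Shift b0) \<longrightarrow> n1 = plugE F1 (Shift b1) \<longrightarrow>
     lr_ctx k F0 F1 \<and>
     (\<forall>c0 c1. lr_nf k c0 c1 \<longrightarrow> is_val c0 \<longrightarrow> is_val c1 \<longrightarrow>
        lr_tm k (Reset (opn b0 c0)) (Reset (opn b1 c1))))"
  unfolding lr_tm_def lr_ctx_def by (simp only: lr_nf.simps)

declare lr_nf.simps(2) [simp del]

lemma lr_nf_mono: "lr_nf k n0 n1 \<Longrightarrow> i \<le> k \<Longrightarrow> lr_nf i n0 n1"
proof (induction k)
  case (Suc k)
  then show ?case by (cases "i = Suc k") (auto simp: lr_nf_Suc)
qed simp

lemma lr_nf_closed: "lr_nf k n0 n1 \<Longrightarrow> closed n0 \<and> closed n1"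
  using lr_nf_mono[of k n0 n1 0] by simp

lemma lr_nf_cases:
  assumes "lr_nf k n0 n1"
  obtains (Lam) b0 b1 where "n0 = Lam b0" "n1 = Lam b1"
  | (control) F0 b0 F1 b1 where "pure F0" "pure F1"
      "n0 = plugE F0 (Shift b0)" "n1 = plugE F1 (Shift b1)"
  using lr_nf_mono[OF assms, of 0] by auto

lemma lr_nf_val:
  assumes "lr_nf k v0 v1" and "is_val v0 \<or> is_val v1"
  shows "\<exists>b0 b1. v0 = Lam b0 \<and> v1 = Lam b1"
  using assms by (cases rule: lr_nf_cases) auto

lemma lr_nf_LamD:
  "lr_nf (Suc k) (Lam b0) (Lam b1) \<Longrightarrow> lr_nf k u0 u1 \<Longrightarrow> is_val u0 \<Longrightarrow> is_val u1 \<Longrightarrow>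
   lr_tm k (opn b0 u0) (opn b1 u1)"
  by (simp add: lr_nf_Suc)

lemma lr_nf_controlD:
  assumes "lr_nf (Suc k) (plugE F0 (Shift b0)) (plugE F1 (Shift b1))" "pure F0" "pure F1"
  shows "lr_ctx k F0 F1"
    and "lr_nf k c0 c1 \<Longrightarrow> is_val c0 \<Longrightarrow> is_val c1 \<Longrightarrow>
      lr_tm k (Reset (opn b0 c0)) (Reset (opn b1 c1))"
  using assms by (simp_all add: lr_nf_Suc)

lemma lr_nf_LamI:
  assumes "closed (Lam b0)" "closed (Lam b1)"
    and "\<And>i u0 u1. i < K \<Longrightarrow> lr_nf i u0 u1 \<Longrightarrow> is_val u0 \<Longrightarrow> is_val u1 \<Longrightarrow>
      lr_tm i (opn b0 u0) (opn b1 u1)"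
  shows "lr_nf K (Lam b0) (Lam b1)"
  using assms(3)
proof (induction K)
  case 0
  then show ?case using assms(1,2) by simp
next
  case (Suc K)
  then show ?case by (simp add: lr_nf_Suc)
qed

lemma lr_nf_controlI:
  assumes "pure F0" "pure F1" "closed (plugE F0 (Shift b0))" "closed (plugE F1 (Shift b1))"
    and "\<And>i. i < K \<Longrightarrow> lr_ctx i F0 F1"
    and "\<And>i c0 c1. i < K \<Longrightarrow> lr_nf i c0 c1 \<Longrightarrow> is_val c0 \<Longrightarrow> is_val c1 \<Longrightarrow>
      lr_tm i (Reset (opn b0 c0)) (Reset (opn b1 c1))"
  shows "lr_nf K (plugE F0 (Shift b0)) (plugE F1 (Shift b1))"
  using assms(5,6)
proof (induction K)
  case 0
  then show ?case using assms(1-4) by auto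
next
  case (Suc K)
  have "lr_ctx K F0' F1' \<and> (\<forall>c0 c1. lr_nf K c0 c1 \<longrightarrow> is_val c0 \<longrightarrow> is_val c1 \<longrightarrow>
      lr_tm K (Reset (opn b0' c0)) (Reset (opn b1' c1)))"
    if "pure F0'" "pure F1'" "plugE F0 (Shift b0) = plugE F0' (Shift b0')"
      "plugE F1 (Shift b1) = plugE F1' (Shift b1')" for F0' b0' F1' b1'
    using that assms(1,2) plugE_control_inject[of F0 F0' b0 b0'] Suc.prems
      plugE_control_inject[of F1 F1' b1 b1'] by auto
  with Suc show ?case by (simp add: lr_nf_Suc)
qed

lemma lr_tm_mono: "lr_tm k s0 s1 \<Longrightarrow> i \<le> k \<Longrightarrow> lr_tm i s0 s1"
  unfolding lr_tm_def
proof (intro allI impI)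
  fix j n
  assume lr: "\<forall>j n. j \<le> k \<longrightarrow> (rd ^^ j) s0 n \<longrightarrow> nf n \<longrightarrow>
      (\<exists>n1. rd\<^sup>*\<^sup>* s1 n1 \<and> nf n1 \<and> lr_nf (k - j) n n1)"
    and "i \<le> k" "j \<le> i" "(rd ^^ j) s0 n" "nf n"
  then obtain n1 where "rd\<^sup>*\<^sup>* s1 n1" "nf n1" "lr_nf (k - j) n n1"
    by (meson le_trans)
  with \<open>i \<le> k\<close> show "\<exists>n1. rd\<^sup>*\<^sup>* s1 n1 \<and> nf n1 \<and> lr_nf (i - j) n n1"
    using lr_nf_mono diff_le_mono by blast
qed

lemma lr_tm_0: "\<not> nf s0 \<Longrightarrow> lr_tm 0 s0 s1"
  unfolding lr_tm_def by auto

lemma lr_tm_nfI: "nf s0 \<Longrightarrow> rd\<^sup>*\<^sup>* s1 n1 \<Longrightarrow> nf n1 \<Longrightarrow> lr_nf k s0 n1 \<Longrightarrow> lr_tm k s0 s1"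
  unfolding lr_tm_def
proof (intro allI impI)
  fix j n
  assume "nf s0" "(rd ^^ j) s0 n" and n1: "rd\<^sup>*\<^sup>* s1 n1" "nf n1" "lr_nf k s0 n1"
  then have "j = 0" "n = s0" using relpowp_rd_from_nf by blast+
  with n1 show "\<exists>n1. rd\<^sup>*\<^sup>* s1 n1 \<and> nf n1 \<and> lr_nf (k - j) n n1" by auto
qed

lemma lr_tmD:
  "lr_tm k s0 s1 \<Longrightarrow> j \<le> k \<Longrightarrow> (rd ^^ j) s0 n \<Longrightarrow> nf n \<Longrightarrow>
   \<exists>n1. rd\<^sup>*\<^sup>* s1 n1 \<and> nf n1 \<and> lr_nf (k - j) n n1"
  unfolding lr_tm_def by blast

lemma lr_tm_expand: "(rd ^^ i) s0 s0' \<Longrightarrow> lr_tm (k - i) s0' s1 \<Longrightarrow> lr_tm k s0 s1"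
  unfolding lr_tm_def
proof (intro allI impI)
  fix j n
  assume s0': "(rd ^^ i) s0 s0'"
    and lr: "\<forall>j n. j \<le> k - i \<longrightarrow> (rd ^^ j) s0' n \<longrightarrow> nf n \<longrightarrow>
      (\<exists>n1. rd\<^sup>*\<^sup>* s1 n1 \<and> nf n1 \<and> lr_nf (k - i - j) n n1)"
    and j: "j \<le> k" and n: "(rd ^^ j) s0 n" "nf n"
  from relpowp_rd_prefix[OF s0' n] have "i \<le> j" "(rd ^^ (j - i)) s0' n"
    by auto
  with j n(2) lr[rule_format, of "j - i" n]
  show "\<exists>n1. rd\<^sup>*\<^sup>* s1 n1 \<and> nf n1 \<and> lr_nf (k - j) n n1"
    by auto
qed

lemma lr_tm_expand1: "rd s0 s0' \<Longrightarrow> lr_tm k s0' s1 \<Longrightarrow> lr_tm (Suc k) s0 s1"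
  using lr_tm_expand[of 1, unfolded relpowp_1, of s0 s0' "Suc k" s1] by simp

lemma lr_tm_reduce: "(rd ^^ i) s0 s0' \<Longrightarrow> lr_tm k s0 s1 \<Longrightarrow> i \<le> k \<Longrightarrow> lr_tm (k - i) s0' s1"
  unfolding lr_tm_def
proof (intro allI impI)
  fix j n
  assume s0': "(rd ^^ i) s0 s0'" and "i \<le> k"
    and lr: "\<forall>j n. j \<le> k \<longrightarrow> (rd ^^ j) s0 n \<longrightarrow> nf n \<longrightarrow>
      (\<exists>n1. rd\<^sup>*\<^sup>* s1 n1 \<and> nf n1 \<and> lr_nf (k - j) n n1)"
    and j: "j \<le> k - i" and n: "(rd ^^ j) s0' n" "nf n"
  from relpowp_trans[OF s0' n(1)] have "(rd ^^ (i + j)) s0 n" .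
  moreover have "i + j \<le> k" "k - (i + j) = k - i - j" using j \<open>i \<le> k\<close> by auto
  ultimately show "\<exists>n1. rd\<^sup>*\<^sup>* s1 n1 \<and> nf n1 \<and> lr_nf (k - i - j) n n1"
    using lr n(2) by metis
qed

lemma lr_tm_reduce1: "rd s0 s0' \<Longrightarrow> lr_tm (Suc k) s0 s1 \<Longrightarrow> lr_tm k s0' s1"
  using lr_tm_reduce[of 1, unfolded relpowp_1, of s0 s0' "Suc k" s1] by simp

lemma lr_tm_expand_right: "rd\<^sup>*\<^sup>* s1 s1' \<Longrightarrow> lr_tm k s0 s1' \<Longrightarrow> lr_tm k s0 s1"
  unfolding lr_tm_def by (meson rtranclp_trans)

lemma lr_tm_reduce_right: "rd s1 s1' \<Longrightarrow> lr_tm k s0 s1 \<Longrightarrow> lr_tm k s0 s1'"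
  unfolding lr_tm_def using rtranclp_rd_to_nf by blast

lemma lr_tm_bind:
  assumes lift0: "\<And>s s'. rd s s' \<Longrightarrow> rd (f0 s) (f0 s')"
    and lift1: "\<And>s s'. rd s s' \<Longrightarrow> rd (f1 s) (f1 s')"
    and cont: "\<And>j m0. j \<le> K \<Longrightarrow> (rd ^^ j) s0 m0 \<Longrightarrow> nf m0 \<Longrightarrow>
      \<exists>m1. rd\<^sup>*\<^sup>* s1 m1 \<and> lr_tm (K - j) (f0 m0) (f1 m1)"
  shows "lr_tm K (f0 s0) (f1 s1)"
  unfolding lr_tm_def
proof (intro allI impI)
  fix j n
  assume j: "j \<le> K" and n: "(rd ^^ j) (f0 s0) n" "nf n"
  obtain j1 m0 where
    m0: "j1 \<le> j" "(rd ^^ j1) s0 m0" "nf m0" "(rd ^^ (j - j1)) (f0 m0) n"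
    using relpowp_rd_decompose[of f0, OF lift0 n] by blast
  with j cont obtain m1 where m1: "rd\<^sup>*\<^sup>* s1 m1" "lr_tm (K - j1) (f0 m0) (f1 m1)"
    by (meson le_trans)
  from m1(2) m0 j n(2) obtain n1 where
    "rd\<^sup>*\<^sup>* (f1 m1) n1" "nf n1" "lr_nf (K - j1 - (j - j1)) n n1"
    unfolding lr_tm_def by (meson diff_le_mono)
  moreover have "K - j1 - (j - j1) = K - j" using m0(1) j by simp
  moreover have "rd\<^sup>*\<^sup>* (f1 s1) (f1 m1)" using lift1 m1(1) by (rule rtranclp_map)
  ultimately show "\<exists>n1. rd\<^sup>*\<^sup>* (f1 s1) n1 \<and> nf n1 \<and> lr_nf (K - j) n n1"
    by (metis rtranclp_trans)
qed

lemma lr_tm_bind_lr_tm: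
  assumes lift0: "\<And>s s'. rd s s' \<Longrightarrow> rd (f0 s) (f0 s')"
    and lift1: "\<And>s s'. rd s s' \<Longrightarrow> rd (f1 s) (f1 s')"
    and lr: "lr_tm K s0 s1"
    and cont: "\<And>j m0 m1. j \<le> K \<Longrightarrow> (rd ^^ j) s0 m0 \<Longrightarrow> nf m0 \<Longrightarrow>
      lr_nf (K - j) m0 m1 \<Longrightarrow> lr_tm (K - j) (f0 m0) (f1 m1)"
  shows "lr_tm K (f0 s0) (f1 s1)"
proof (rule lr_tm_bind[OF lift0 lift1])
  fix j m0
  assume "j \<le> K" "(rd ^^ j) s0 m0" "nf m0"
  with lr obtain m1 where "rd\<^sup>*\<^sup>* s1 m1" "lr_nf (K - j) m0 m1"
    unfolding lr_tm_def by blast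
  with cont \<open>j \<le> K\<close> \<open>(rd ^^ j) s0 m0\<close> \<open>nf m0\<close>
  show "\<exists>m1. rd\<^sup>*\<^sup>* s1 m1 \<and> lr_tm (K - j) (f0 m0) (f1 m1)" by blast
qed

section \<open>Compatibility with evaluation contexts\<close>

lemma lr_tm_beta:
  assumes "lr_nf K w0 w1" "is_val w0" "lr_nf (K - 1) u0 u1" "is_val u0"
  shows "lr_tm K (App w0 u0) (App w1 u1)"
proof -
  obtain b0 b1 where w: "w0 = Lam b0" "w1 = Lam b1"
    using lr_nf_val assms(1,2) by blast
  have "closed w0" "closed w1" "closed u0" "closed u1"
    using lr_nf_closed assms(1,3) by auto
  moreover have "is_val u1" using lr_nf_val[OF assms(3)] assms(4) by auto
  ultimately have r0: "rd (App w0 u0) (opn b0 u0)" and r1: "rd (App w1 u1) (opn b1 u1)"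
    using w assms(4) by (auto simp: closed_def intro!: rd_beta)
  show ?thesis
  proof (cases K)
    case 0
    then show ?thesis using r0 lr_tm_0 by blast
  next
    case (Suc K')
    with assms w \<open>is_val u1\<close> have "lr_tm K' (opn b0 u0) (opn b1 u1)"
      by (auto intro: lr_nf_LamD)
    with r0 r1 Suc show ?thesis
      by (blast intro: lr_tm_expand1 lr_tm_expand_right)
  qed
qed

lemma lr_ctx_compE:
  assumes "lr_ctx i G0 G1"
    and "\<And>s0 s1. lr_tm i s0 s1 \<Longrightarrow> lr_tm i (plugE F0 s0) (plugE F1 s1)"
  shows "lr_ctx i (compE F0 G0) (compE F1 G1)"
  using assms by (simp add: lr_ctx_def plugE_compE)

lemma lr_rctx_compE:
  assumes "lr_ctx i G0 G1"
    and "\<And>s0 s1. lr_tm i s0 s1 \<Longrightarrow> lr_tm i (Reset (plugE F0 s0)) (Reset (plugE F1 s1))"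
  shows "lr_rctx i (compE F0 G0) (compE F1 G1)"
  using assms by (simp add: lr_ctx_def lr_rctx_def plugE_compE)

lemma lr_nf_control_compE:
  assumes L: "lr_nf K (plugE G0 (Shift b0)) (plugE G1 (Shift b1))" "pure G0" "pure G1"
    and F: "pure F0" "pure F1" "fvE F0 = {}" "fvE F1 = {}"
    and ext: "\<And>i. i < K \<Longrightarrow> lr_ctx i G0 G1 \<Longrightarrow> lr_ctx i (compE F0 G0) (compE F1 G1)"
  shows "lr_nf K (plugE (compE F0 G0) (Shift b0)) (plugE (compE F1 G1) (Shift b1))"
proof (rule lr_nf_controlI)
  show "pure (compE F0 G0)" "pure (compE F1 G1)" using L F by simp_all
  show "closed (plugE (compE F0 G0) (Shift b0))" "closed (plugE (compE F1 G1) (Shift b1))"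
    using lr_nf_closed[OF L(1)] F closed_plugE pure_evctx by (simp_all add: plugE_compE)
next
  fix i assume "i < K"
  then have L': "lr_nf (Suc i) (plugE G0 (Shift b0)) (plugE G1 (Shift b1))"
    using lr_nf_mono[OF L(1)] by simp
  from \<open>i < K\<close> ext lr_nf_controlD(1)[OF L' L(2,3)]
  show "lr_ctx i (compE F0 G0) (compE F1 G1)" by blast
  show "lr_nf i c0 c1 \<Longrightarrow> is_val c0 \<Longrightarrow> is_val c1 \<Longrightarrow>
      lr_tm i (Reset (opn b0 c0)) (Reset (opn b1 c1))" for c0 c1
    using lr_nf_controlD(2)[OF L' L(2,3)] .
qed

lemma lr_tm_plug_pure:
  assumes F: "pure F0" "pure F1" "fvE F0 = {}" "fvE F1 = {}"
  shows "lr_tm K s0 s1 \<Longrightarrow> (\<And>i. i \<le> K \<Longrightarrow> lr_ctx i F0 F1) \<Longrightarrow>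
    lr_tm K (plugE F0 s0) (plugE F1 s1)"
proof (induction K arbitrary: s0 s1 rule: less_induct)
  case (less K)
  show ?case
  proof (rule lr_tm_bind_lr_tm[OF _ _ less.prems(1)])
    fix j m0 m1
    assume "j \<le> K" and L: "lr_nf (K - j) m0 m1"
    from L show "lr_tm (K - j) (plugE F0 m0) (plugE F1 m1)"
    proof (cases rule: lr_nf_cases)
      case Lam
      then show ?thesis using less.prems(2)[of "K - j"] L by (simp add: lr_ctx_def)
    next
      case (control G0 b0 G1 b1)
      have "lr_nf (K - j) (plugE (compE F0 G0) (Shift b0)) (plugE (compE F1 G1) (Shift b1))"
      proof (rule lr_nf_control_compE[OF L[unfolded control(3,4)] control(1,2) F])
        fix i assume "i < K - j" "lr_ctx i G0 G1"
        with less.IH[of i] less.prems(2) show "lr_ctx i (compE F0 G0) (compE F1 G1)"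
          by (intro lr_ctx_compE) auto
      qed
      moreover have "nf (plugE (compE F0 G0) (Shift b0))" "nf (plugE (compE F1 G1) (Shift b1))"
        using control F by (simp_all add: control_nf)
      ultimately show ?thesis
        using control by (simp add: plugE_compE lr_tm_nfI[OF _ rtranclp.rtrancl_refl])
    qed
  qed (use F rd_plugE pure_evctx in auto)
qed

lemma lr_nf_captured_cont:
  assumes "evctx H0" "evctx H1" "fvE H0 = {}" "fvE H1 = {}"
    and "\<And>i. i < K \<Longrightarrow> lr_rctx i H0 H1"
  shows "lr_nf K (Lam (Reset (plugE H0 (BV 0)))) (Lam (Reset (plugE H1 (BV 0))))"
proof (rule lr_nf_LamI)
  show "closed (Lam (Reset (plugE H0 (BV 0))))" "closed (Lam (Reset (plugE H1 (BV 0))))"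
    using assms(1-4) by (simp_all add: closed_def lc_plugE_BV fv_plugE)
  show "lr_tm i (opn (Reset (plugE H0 (BV 0))) u0) (opn (Reset (plugE H1 (BV 0))) u1)"
    if "i < K" "lr_nf i u0 u1" "is_val u0" "is_val u1" for i u0 u1
    using that assms(1,2,5) by (simp add: open_plugE lr_rctx_def)
qed

lemma lr_tm_Reset_control:
  assumes L: "lr_nf K (plugE G0 (Shift b0)) (plugE G1 (Shift b1))" "pure G0" "pure G1"
    and F: "pure F0" "pure F1" "fvE F0 = {}" "fvE F1 = {}"
    and ext: "\<And>i. i < K \<Longrightarrow> lr_ctx i G0 G1 \<Longrightarrow> lr_rctx i (compE F0 G0) (compE F1 G1)"
  shows "lr_tm K (Reset (plugE F0 (plugE G0 (Shift b0)))) (Reset (plugE F1 (plugE G1 (Shift b1))))"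
proof -
  define H0 H1 where "H0 = compE F0 G0" and "H1 = compE F1 G1"
  define c0 c1 where "c0 = Lam (Reset (plugE H0 (BV 0)))" and "c1 = Lam (Reset (plugE H1 (BV 0)))"
  have H: "pure H0" "pure H1" "fvE H0 = {}" "fvE H1 = {}"
    using L F lr_nf_closed[OF L(1)] by (auto simp: H0_def H1_def closed_def fv_plugE)
  have "closed (plugE H0 (Shift b0))" "closed (plugE H1 (Shift b1))"
    using lr_nf_closed[OF L(1)] F closed_plugE pure_evctx by (simp_all add: H0_def H1_def plugE_compE)
  then have r0: "rd (Reset (plugE H0 (Shift b0))) (Reset (opn b0 c0))"
    and r1: "rd (Reset (plugE H1 (Shift b1))) (Reset (opn b1 c1))"
    using H by (auto simp: closed_def c0_def c1_def intro: rd_shift)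
  show ?thesis
  proof (cases K)
    case 0
    with r0 show ?thesis by (auto simp: H0_def plugE_compE intro: lr_tm_0)
  next
    case (Suc K')
    have "lr_nf K' c0 c1"
      unfolding c0_def c1_def
    proof (rule lr_nf_captured_cont)
      fix i assume "i < K'"
      with Suc have "lr_nf (Suc i) (plugE G0 (Shift b0)) (plugE G1 (Shift b1))"
        using lr_nf_mono[OF L(1)] by simp
      with \<open>i < K'\<close> Suc ext show "lr_rctx i H0 H1"
        using lr_nf_controlD(1)[OF _ L(2,3)] by (simp add: H0_def H1_def)
    qed (use H pure_evctx in auto)
    with L Suc have "lr_tm K' (Reset (opn b0 c0)) (Reset (opn b1 c1))"
      by (auto simp: c0_def c1_def intro: lr_nf_controlD(2))
    with r0 r1 Suc show ?thesis
      by (auto simp: H0_def H1_def plugE_compE intro: lr_tm_expand1 lr_tm_expand_right)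
  qed
qed

lemma lr_tm_plug_reset:
  assumes F: "pure F0" "pure F1" "fvE F0 = {}" "fvE F1 = {}"
  shows "lr_tm K s0 s1 \<Longrightarrow> (\<And>i. i \<le> K \<Longrightarrow> lr_rctx i F0 F1) \<Longrightarrow>
    lr_tm K (Reset (plugE F0 s0)) (Reset (plugE F1 s1))"
proof (induction K arbitrary: s0 s1 rule: less_induct)
  case (less K)
  show ?case
  proof (rule lr_tm_bind_lr_tm[OF _ _ less.prems(1)])
    fix j m0 m1
    assume "j \<le> K" and L: "lr_nf (K - j) m0 m1"
    from L show "lr_tm (K - j) (Reset (plugE F0 m0)) (Reset (plugE F1 m1))"
    proof (cases rule: lr_nf_cases)
      case Lam
      then show ?thesis using less.prems(2)[of "K - j"] L by (simp add: lr_rctx_def)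
    next
      case (control G0 b0 G1 b1)
      have "lr_tm (K - j) (Reset (plugE F0 (plugE G0 (Shift b0))))
          (Reset (plugE F1 (plugE G1 (Shift b1))))"
      proof (rule lr_tm_Reset_control[OF L[unfolded control(3,4)] control(1,2) F])
        fix i assume "i < K - j" "lr_ctx i G0 G1"
        with less.IH[of i] less.prems(2) show "lr_rctx i (compE F0 G0) (compE F1 G1)"
          by (intro lr_rctx_compE) auto
      qed
      with control show ?thesis by simp
    qed
  qed (use F rd_plugE[of "Rst _"] pure_evctx in auto)
qed

lemma lr_tm_plug_val:
  assumes E: "evctx E0" "evctx E1" and lr: "lr_tm K s0 s1"
    and val: "\<And>j m. (rd ^^ j) s0 m \<Longrightarrow> nf m \<Longrightarrow> is_val m" and red: "\<not> nf s0"
    and ctx: "\<And>i. i < K \<Longrightarrow> lr_ctx i E0 E1"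
  shows "lr_tm K (plugE E0 s0) (plugE E1 s1)"
proof (rule lr_tm_bind_lr_tm[OF _ _ lr])
  fix j m0 m1
  assume "j \<le> K" "(rd ^^ j) s0 m0" "nf m0" and L: "lr_nf (K - j) m0 m1"
  moreover from this red have "j \<noteq> 0" by (metis relpowp_0_E)
  moreover from val \<open>(rd ^^ j) s0 m0\<close> \<open>nf m0\<close> have "is_val m0" by blast
  moreover from this L have "is_val m1" using lr_nf_val by fastforce
  ultimately show "lr_tm (K - j) (plugE E0 m0) (plugE E1 m1)"
    using ctx[of "K - j"] by (simp add: lr_ctx_def)
qed (use E rd_plugE in auto)

lemma lr_ctx_Hole: "lr_ctx i Hole Hole"
  unfolding lr_ctx_def by (auto intro: lr_tm_nfI[OF val_nf rtranclp.rtrancl_refl val_nf])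

lemma lr_rctx_Hole: "lr_rctx i Hole Hole"
  unfolding lr_rctx_def
proof (intro allI impI)
  fix v0 v1
  assume L: "lr_nf i v0 v1" and v: "is_val v0" "is_val v1"
  with lr_nf_closed[OF L] have r0: "rd (Reset v0) v0" and r1: "rd (Reset v1) v1"
    by (auto simp: closed_def intro: rd_reset)
  show "lr_tm i (Reset (plugE Hole v0)) (Reset (plugE Hole v1))"
  proof (cases i)
    case 0
    then show ?thesis using r0 lr_tm_0 by auto
  next
    case (Suc i')
    from L Suc have "lr_nf i' v0 v1" by (simp add: lr_nf_mono)
    with v r1 have "lr_tm i' v0 (Reset v1)"
      by (intro lr_tm_nfI[OF val_nf _ val_nf]) auto
    with r0 Suc show ?thesis by (simp add: lr_tm_expand1)
  qed
qed

lemma lr_tm_Reset: "lr_tm K s0 s1 \<Longrightarrow> lr_tm K (Reset s0) (Reset s1)"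
  using lr_tm_plug_reset[of Hole Hole K s0 s1] lr_rctx_Hole by simp

lemma lr_ctx_ApR:
  assumes "lr_nf i v0 v1" "is_val v0"
  shows "lr_ctx i (ApR v0 Hole) (ApR v1 Hole)"
  unfolding lr_ctx_def
  using lr_tm_beta[OF assms] lr_nf_mono[of i _ _ "i - 1"] by simp

lemma lr_ctx_ApL:
  assumes "lr_tm i c0 c1" "closed c0" "closed c1"
  shows "lr_ctx i (ApL Hole c0) (ApL Hole c1)"
  unfolding lr_ctx_def
proof (intro allI impI)
  fix v0 v1
  assume L: "lr_nf i v0 v1" and v: "is_val v0" "is_val v1"
  with lr_nf_closed[OF L] have "lr_tm i (plugE (ApR v0 Hole) c0) (plugE (ApR v1 Hole) c1)"
    using lr_tm_plug_pure[of "ApR v0 Hole" "ApR v1 Hole", OF _ _ _ _ assms(1)]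
      lr_ctx_ApR lr_nf_mono
    by (auto simp: closed_def)
  then show "lr_tm i (plugE (ApL Hole c0) v0) (plugE (ApL Hole c1) v1)" by simp
qed

lemma lr_tm_App:
  assumes "lr_tm K a0 a1" "lr_tm K c0 c1" "closed c0" "closed c1"
  shows "lr_tm K (App a0 c0) (App a1 c1)"
  using lr_tm_plug_pure[of "ApL Hole c0" "ApL Hole c1", OF _ _ _ _ assms(1)]
    lr_ctx_ApL lr_tm_mono assms(2-4)
  by (auto simp: closed_def)

text \<open>When the left term takes a step, the frames only need to be related at smaller indices.\<close>

lemma lr_tm_plug_pure_step:
  assumes F: "pure F0" "pure F1" "fvE F0 = {}" "fvE F1 = {}"
    and lr: "lr_tm K s0 s1" and red: "rd s0 s0'"
    and ctx: "\<And>i. i < K \<Longrightarrow> lr_ctx i F0 F1"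
  shows "lr_tm K (plugE F0 s0) (plugE F1 s1)"
proof (cases K)
  case 0
  then show ?thesis using red rd_plugE F pure_evctx lr_tm_0 by blast
next
  case (Suc K')
  with lr red have "lr_tm K' s0' s1" by (simp add: lr_tm_reduce1)
  with F ctx Suc have "lr_tm K' (plugE F0 s0') (plugE F1 s1)"
    by (intro lr_tm_plug_pure) auto
  with Suc red F show ?thesis
    by (auto intro: lr_tm_expand1 rd_plugE pure_evctx)
qed

lemma lr_tm_plug_reset_step:
  assumes F: "pure F0" "pure F1" "fvE F0 = {}" "fvE F1 = {}"
    and lr: "lr_tm K s0 s1" and red: "rd s0 s0'"
    and ctx: "\<And>i. i < K \<Longrightarrow> lr_rctx i F0 F1"
  shows "lr_tm K (Reset (plugE F0 s0)) (Reset (plugE F1 s1))"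
proof -
  from red F have red': "rd (Reset (plugE F0 s0)) (Reset (plugE F0 s0'))"
    by (auto intro: rd_Reset rd_plugE pure_evctx)
  show ?thesis
  proof (cases K)
    case 0
    then show ?thesis using red' lr_tm_0 by blast
  next
    case (Suc K')
    with lr red have "lr_tm K' s0' s1" by (simp add: lr_tm_reduce1)
    with F ctx Suc have "lr_tm K' (Reset (plugE F0 s0')) (Reset (plugE F1 s1))"
      by (intro lr_tm_plug_reset) auto
    with Suc red' show ?thesis by (simp add: lr_tm_expand1)
  qed
qed

lemma closed_val_Lam: "closed v \<Longrightarrow> is_val v \<Longrightarrow> \<exists>b. v = Lam b"
  by (cases v) (auto simp: closed_def)

lemma lr_tm_plug_beta:
  assumes F: "pure F0" "pure F1" "fvE F0 = {}" "fvE F1 = {}"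
    and w: "lr_nf K w0 w1" "is_val w0" and u: "lr_nf (K - 1) u0 u1" "is_val u0"
    and ctx: "\<And>i. i < K \<Longrightarrow> lr_ctx i F0 F1"
  shows "lr_tm K (plugE F0 (App w0 u0)) (plugE F1 (App w1 u1))"
proof -
  obtain b where "w0 = Lam b" using lr_nf_val w by blast
  with w u lr_nf_closed have "rd (App w0 u0) (opn b u0)"
    by (auto simp: closed_def intro: rd_beta)
  then show ?thesis using lr_tm_plug_pure_step[OF F lr_tm_beta[OF w u]] ctx by blast
qed

lemma lr_tm_plug_reset_beta:
  assumes F: "pure F0" "pure F1" "fvE F0 = {}" "fvE F1 = {}"
    and w: "lr_nf K w0 w1" "is_val w0" and u: "lr_nf (K - 1) u0 u1" "is_val u0"
    and ctx: "\<And>i. i < K \<Longrightarrow> lr_rctx i F0 F1"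
  shows "lr_tm K (Reset (plugE F0 (App w0 u0))) (Reset (plugE F1 (App w1 u1)))"
proof -
  obtain b where "w0 = Lam b" using lr_nf_val w by blast
  with w u lr_nf_closed have "rd (App w0 u0) (opn b u0)"
    by (auto simp: closed_def intro: rd_beta)
  then show ?thesis using lr_tm_plug_reset_step[OF F lr_tm_beta[OF w u]] ctx by blast
qed

lemma lr_tm_plug_reset_beta_val:
  assumes E: "evctx E0" "evctx E1" and F: "pure F0" "pure F1" "fvE F0 = {}" "fvE F1 = {}"
    and w: "lr_nf K w0 w1" "is_val w0" and u: "lr_nf (K - 1) u0 u1" "is_val u0"
    and cl: "closed (plugE F0 (App w0 u0))"
    and rctx: "\<And>i. i < K \<Longrightarrow> lr_rctx i F0 F1" and ctx: "\<And>i. i < K \<Longrightarrow> lr_ctx i E0 E1"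
  shows "lr_tm K (plugE E0 (Reset (plugE F0 (App w0 u0)))) (plugE E1 (Reset (plugE F1 (App w1 u1))))"
  using E lr_tm_plug_reset_beta[OF F w u rctx]
    relpowp_closed_Reset_val[OF _ _ cl] closed_Reset_not_nf[OF cl] ctx
  by (rule lr_tm_plug_val)

section \<open>Normal form bisimulations are in the logical relation\<close>

definition lr_subst :: "nat \<Rightarrow> (var \<Rightarrow> trm) \<Rightarrow> (var \<Rightarrow> trm) \<Rightarrow> var set \<Rightarrow> bool" where
  "lr_subst k g0 g1 X \<longleftrightarrow> val_subst g0 \<and> val_subst g1 \<and> (\<forall>x\<in>X. lr_nf k (g0 x) (g1 x))"

lemma lr_subst_mono: "lr_subst k g0 g1 X \<Longrightarrow> i \<le> k \<Longrightarrow> Y \<subseteq> X \<Longrightarrow> lr_subst i g0 g1 Y"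
  unfolding lr_subst_def using lr_nf_mono by blast

lemma lr_subst_upd:
  "lr_subst k g0 g1 X \<Longrightarrow> lr_nf k u0 u1 \<Longrightarrow> is_val u0 \<Longrightarrow> is_val u1 \<Longrightarrow>
   lr_subst k (g0(z := u0)) (g1(z := u1)) (insert z X)"
  unfolding lr_subst_def val_subst_def using lr_nf_closed[of k u0 u1] by (auto simp: closed_def)

lemma lr_subst_upd_mono:
  assumes "lr_subst k g0 g1 X" "i \<le> k" "lr_nf i u0 u1" "is_val u0" "is_val u1"
    and "Y \<subseteq> insert z X"
  shows "lr_subst i (g0(z := u0)) (g1(z := u1)) Y"
proof -
  from assms(1,2) have "lr_subst i g0 g1 X" by (rule lr_subst_mono) simp
  then have "lr_subst i (g0(z := u0)) (g1(z := u1)) (insert z X)"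
    by (rule lr_subst_upd[OF _ assms(3-5)])
  then show ?thesis by (rule lr_subst_mono[OF _ order_refl assms(6)])
qed

lemma lr_subst_val_subst: "lr_subst k g0 g1 X \<Longrightarrow> val_subst g0 \<and> val_subst g1"
  unfolding lr_subst_def by blast

lemma lr_subst_FV: "lr_subst k FV FV {}"
  unfolding lr_subst_def val_subst_def by simp

lemma lr_subst_closed_range:
  assumes "lr_subst k g0 g1 X" "x \<in> X"
  shows "closed (g0 x)" "closed (g1 x)"
  using assms lr_nf_closed unfolding lr_subst_def by blast+

lemma lr_subst_closed:
  assumes "lr_subst k g0 g1 X" "fv t \<subseteq> X" "lc t"
  shows "closed (msubst g0 t)" "closed (msubst g1 t)"
proof -
  have "fv (g0 x) = {}" "fv (g1 x) = {}" if "x \<in> fv t" for x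
    using lr_subst_closed_range[OF assms(1)] assms(2) that by (auto simp: closed_def)
  with lr_subst_val_subst[OF assms(1)] assms(3) show "closed (msubst g0 t)" "closed (msubst g1 t)"
    by (auto intro: closed_msubst)
qed

lemma lr_subst_closed_ctx:
  assumes "lr_subst k g0 g1 X" "fvE E \<subseteq> X"
  shows "fvE (msubstE g0 E) = {}" "fvE (msubstE g1 E) = {}"
  using assms lr_subst_closed_range[OF assms(1)]
  by (auto simp: fvE_msubstE closed_def)

lemma lr_subst_lr_tm:
  assumes "lr_subst k g0 g1 X" "x \<in> X"
  shows "lr_tm k (g0 x) (g1 x)"
  using assms unfolding lr_subst_def val_subst_def
  by (auto intro: lr_tm_nfI[OF val_nf rtranclp.rtrancl_refl val_nf])

lemma ctx_rel_Hole:
  "ctx_rel Q Hole E1 \<Longrightarrow> pure E1 \<and> (\<exists>x. x \<notin> fvE E1 \<and> Q (FV x) (plugE E1 (FV x)))"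
proof -
  have "Hole \<noteq> compE E (Rst F)" for E F by (cases E) auto
  then show "ctx_rel Q Hole E1 \<Longrightarrow> ?thesis" unfolding ctx_rel_def by auto
qed

lemma val_rel_converse: "val_rel (\<lambda>a b. Q b a) v0 v1 \<longleftrightarrow> val_rel Q v1 v0"
  unfolding val_rel_def by blast

lemma nf_bisim_converse: "nf_bisim R \<Longrightarrow> nf_bisim (\<lambda>a b. R b a)"
  unfolding nf_bisim_def by auto

lemma nf_sim_open_stuck:
  assumes "nf_sim Q" "Q (App (FV y) (FV z)) t1"
  obtains E1 v1 x where "rd\<^sup>*\<^sup>* t1 (plugE E1 (App (FV y) v1))" "pure E1" "x \<notin> fvE E1"
    "Q (FV x) (plugE E1 (FV x))" "val_rel Q (FV z) v1"
proof -
  have "nf (App (FV y) (FV z))"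
    using val_nf[of "FV y"] val_nf[of "FV z"] by (auto elim: rd_AppE)
  with assms obtain n1 where n1: "rd\<^sup>*\<^sup>* t1 n1" "nf_rel Q (App (FV y) (FV z)) n1"
    unfolding nf_sim_def eval_iff by blast
  have "\<not> val_rel Q (App (FV y) (FV z)) n1" by (simp add: val_rel_def)
  moreover have "App (FV y) (FV z) \<noteq> plugE F0 (Shift b0)" if "pure F0" for F0 b0
    using that by (cases F0) auto
  ultimately obtain E0 E1 x v0 v1 where h:
    "App (FV y) (FV z) = plugE E0 (App (FV x) v0)" "n1 = plugE E1 (App (FV x) v1)"
    "ctx_rel Q E0 E1" "val_rel Q v0 v1"
    using n1(2) unfolding nf_rel_def by blast
  from h(1) have "E0 = Hole \<and> x = y \<and> v0 = FV z" by (cases E0) auto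
  with h n1(1) ctx_rel_Hole[of Q E1] that show ?thesis by blast
qed

locale nf_bisimulation =
  fixes R :: "trm \<Rightarrow> trm \<Rightarrow> bool"
  assumes nf_bisim: "nf_bisim R"
begin

lemma R_lc: "R t0 t1 \<Longrightarrow> lc t0 \<and> lc t1"
  using nf_bisim unfolding nf_bisim_def by blast

lemma nf_sim_R: "nf_sim R"
  using nf_bisim unfolding nf_bisim_def by blast

lemma R_sim: "R t0 t1 \<Longrightarrow> rd\<^sup>*\<^sup>* t0 m0 \<Longrightarrow> nf m0 \<Longrightarrow> \<exists>m1. rd\<^sup>*\<^sup>* t1 m1 \<and> nf m1 \<and> nf_rel R m0 m1"
  using nf_sim_R unfolding nf_sim_def eval_iff by blast

lemma nf_sim_converse: "nf_sim (\<lambda>a b. R b a)"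
  using nf_bisim unfolding nf_bisim_def by blast

lemma val_rel_lc:
  assumes "val_rel R m0 m1"
  shows "lc m0 \<and> lc m1"
proof -
  from assms obtain z where "is_val m0" "is_val m1" "R (app_at m0 z) (app_at m1 z)"
    unfolding val_rel_def by blast
  then have "is_val m0" "is_val m1" "lc (app_at m0 z)" "lc (app_at m1 z)"
    using R_lc by blast+
  then show ?thesis by (cases m0; cases m1) (auto simp: lc_open_FV_iff)
qed

lemma val_rel_FV: "val_rel R (FV y) (FV y') \<Longrightarrow> y = y'"
proof -
  assume "val_rel R (FV y) (FV y')"
  then obtain z where "R (App (FV y) (FV z)) (App (FV y') (FV z))"
    unfolding val_rel_def by auto
  then obtain E1 v1 where "rd\<^sup>*\<^sup>* (App (FV y') (FV z)) (plugE E1 (App (FV y) v1))"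
    by (rule nf_sim_open_stuck[OF nf_sim_R])
  moreover have "nf (App (FV y') (FV z))"
    using val_nf[of "FV y'"] val_nf[of "FV z"] by (auto elim: rd_AppE)
  ultimately have "App (FV y') (FV z) = plugE E1 (App (FV y) v1)"
    by (metis converse_rtranclpE)
  then show "y = y'" by (cases E1) auto
qed

definition R_in_lr :: "nat \<Rightarrow> bool" where
  "R_in_lr K \<longleftrightarrow> (\<forall>t0 t1 g0 g1. R t0 t1 \<longrightarrow> lr_subst K g0 g1 (fv t0 \<union> fv t1) \<longrightarrow>
     lr_tm K (msubst g0 t0) (msubst g1 t1))"

definition val_rel_in_lr :: "nat \<Rightarrow> bool" where
  "val_rel_in_lr K \<longleftrightarrow> (\<forall>m0 m1 g0 g1. val_rel R m0 m1 \<longrightarrow> lr_subst K g0 g1 (fv m0 \<union> fv m1) \<longrightarrow>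
     lr_nf K (msubst g0 m0) (msubst g1 m1))"

lemma val_rel_in_lrD:
  "val_rel_in_lr K \<Longrightarrow> val_rel R m0 m1 \<Longrightarrow> lr_subst K g0 g1 X \<Longrightarrow> fv m0 \<union> fv m1 \<subseteq> X \<Longrightarrow>
   lr_nf K (msubst g0 m0) (msubst g1 m1)"
  unfolding val_rel_in_lr_def using lr_subst_mono[OF _ order_refl] by blast

lemma R_in_lr_upd:
  assumes "R_in_lr i" "R s0 s1" "lr_subst i g0 g1 X" "fv s0 \<union> fv s1 \<subseteq> insert x X"
    "lr_nf i w0 w1" "is_val w0" "is_val w1"
  shows "lr_tm i (msubst (g0(x := w0)) s0) (msubst (g1(x := w1)) s1)"
  using assms lr_subst_upd_mono[OF assms(3) order_refl assms(5-7) assms(4)]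
  unfolding R_in_lr_def by blast

lemma lr_ctx_of_R:
  assumes "R_in_lr i" "R (plugE E0 (FV x)) (plugE E1 (FV x))" "x \<notin> fvE E0 \<union> fvE E1"
    "lr_subst i g0 g1 X" "fvE E0 \<union> fvE E1 \<subseteq> X"
  shows "lr_ctx i (msubstE g0 E0) (msubstE g1 E1)"
  unfolding lr_ctx_def
proof (intro allI impI)
  fix w0 w1 assume "lr_nf i w0 w1" "is_val w0" "is_val w1"
  with assms have "lr_tm i (msubst (g0(x := w0)) (plugE E0 (FV x)))
      (msubst (g1(x := w1)) (plugE E1 (FV x)))"
    by (intro R_in_lr_upd) (auto simp: fv_plugE)
  with assms(3) show "lr_tm i (plugE (msubstE g0 E0) w0) (plugE (msubstE g1 E1) w1)"
    by (simp add: msubst_upd_plugE)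
qed

lemma lr_rctx_of_R:
  assumes "R_in_lr i" "R (Reset (plugE E0 (FV x))) (Reset (plugE E1 (FV x)))"
    "x \<notin> fvE E0 \<union> fvE E1" "lr_subst i g0 g1 X" "fvE E0 \<union> fvE E1 \<subseteq> X"
  shows "lr_rctx i (msubstE g0 E0) (msubstE g1 E1)"
  unfolding lr_rctx_def
proof (intro allI impI)
  fix w0 w1 assume "lr_nf i w0 w1" "is_val w0" "is_val w1"
  with assms have "lr_tm i (msubst (g0(x := w0)) (Reset (plugE E0 (FV x))))
      (msubst (g1(x := w1)) (Reset (plugE E1 (FV x))))"
    by (intro R_in_lr_upd) (auto simp: fv_plugE)
  with assms(3) show "lr_tm i (Reset (plugE (msubstE g0 E0) w0)) (Reset (plugE (msubstE g1 E1) w1))"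
    by (simp add: msubst_upd_plugE)
qed

end

context nf_bisimulation
begin

lemma lr_tm_val_rel_FV_Lam:
  assumes Rlr: "\<And>i'. i' \<le> i \<Longrightarrow> R_in_lr i'" and Vlr: "val_rel_in_lr i"
    and vr: "val_rel R (FV y) (Lam a1)" and gr: "lr_subst (Suc i) g0 g1 (insert y (fv a1))"
    and b0: "g0 y = Lam b0" and u: "lr_nf i u0 u1" "is_val u0" "is_val u1"
  shows "lr_tm i (opn b0 u0) (opn (msubst g1 a1) u1)"
proof -
  obtain z where z: "z \<notin> insert y (fv a1)" "R (App (FV y) (FV z)) (opn a1 (FV z))"
    using vr unfolding val_rel_def by auto
  obtain E1 v1 x where E1: "rd\<^sup>*\<^sup>* (opn a1 (FV z)) (plugE E1 (App (FV y) v1))" "pure E1"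
    "x \<notin> fvE E1" "R (FV x) (plugE E1 (FV x))" "val_rel R (FV z) v1"
    by (rule nf_sim_open_stuck[OF nf_sim_R z(2)])
  define X g0' g1' where "X = insert z (insert y (fv a1))"
    and "g0' = g0(z := u0)" and "g1' = g1(z := u1)"
  have gr': "lr_subst i g0' g1' X"
    using lr_subst_upd_mono[OF gr _ u] by (auto simp: X_def g0'_def g1'_def)
  have fv: "fvE E1 \<subseteq> X" "fv v1 \<subseteq> X"
    using rtranclp_rd_fv[OF E1(1)] fv_open[of 0 "FV z" a1] by (auto simp: fv_plugE X_def)
  have vs: "val_subst g1" "val_subst g1'" using lr_subst_val_subst gr gr' by blast+
  from rtranclp_imp_relpowp[OF E1(1)] obtain j
    where "(rd ^^ j) (opn a1 (FV z)) (plugE E1 (App (FV y) v1))" ..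
  from relpowp_rd_open_inst[OF this vs[unfolded g1'_def]] z(1)
  have right: "rd\<^sup>*\<^sup>* (opn (msubst g1 a1) u1) (plugE (msubstE g1' E1) (App (g1 y) (msubst g1' v1)))"
    by (auto simp: g1'_def intro: relpowp_imp_rtranclp)
  have "lr_nf i u0 (msubst g1' v1)"
    using val_rel_in_lrD[OF Vlr E1(5) gr'] fv by (simp add: X_def g0'_def)
  moreover have "lr_ctx i' Hole (msubstE g1' E1)" if "i' < Suc i" for i'
    using lr_ctx_of_R[of i' Hole x E1, OF Rlr _ _ lr_subst_mono[OF gr']] that E1(3,4) fv
    by fastforce
  ultimately have "lr_tm (Suc i) (plugE Hole (App (g0 y) u0))
      (plugE (msubstE g1' E1) (App (g1 y) (msubst g1' v1)))"
    using gr E1(2) pure_msubstE vs lr_subst_closed_ctx[OF gr' fv(1)] u(2)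
    by (intro lr_tm_plug_beta) (auto simp: lr_subst_def val_subst_def)
  moreover have "rd (App (g0 y) u0) (opn b0 u0)"
    using b0 lr_subst_closed_range(1)[OF gr, of y] lr_nf_closed[OF u(1)] u(2)
    by (auto intro: rd_beta_closed)
  ultimately show ?thesis
    using right by (auto intro: lr_tm_reduce1 lr_tm_expand_right)
qed

lemma lr_tm_val_rel_Lam_FV:
  assumes Rlr: "\<And>i'. i' \<le> i \<Longrightarrow> R_in_lr i'" and Vlr: "\<And>i'. i' \<le> i \<Longrightarrow> val_rel_in_lr i'"
    and vr: "val_rel R (Lam a0) (FV y)" and gr: "lr_subst (Suc i) g0 g1 (insert y (fv a0))"
    and b1: "g1 y = Lam b1" and u: "lr_nf i u0 u1" "is_val u0" "is_val u1"
  shows "lr_tm i (opn (msubst g0 a0) u0) (opn b1 u1)"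
proof -
  obtain z where z: "z \<notin> insert y (fv a0)" "R (opn a0 (FV z)) (App (FV y) (FV z))"
    using vr unfolding val_rel_def by auto
  obtain E0 v0 x where E0: "rd\<^sup>*\<^sup>* (opn a0 (FV z)) (plugE E0 (App (FV y) v0))" "pure E0"
    "x \<notin> fvE E0" "R (plugE E0 (FV x)) (FV x)" "val_rel (\<lambda>a b. R b a) (FV z) v0"
    by (rule nf_sim_open_stuck[OF nf_sim_converse, where y = y and z = z]) (use z(2) in simp)
  define X g0' g1' where "X = insert z (insert y (fv a0))"
    and "g0' = g0(z := u0)" and "g1' = g1(z := u1)"
  have gr': "lr_subst i g0' g1' X"
    using lr_subst_upd_mono[OF gr _ u] by (auto simp: X_def g0'_def g1'_def)
  have fv: "fvE E0 \<subseteq> X" "fv v0 \<subseteq> X"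
    using rtranclp_rd_fv[OF E0(1)] fv_open[of 0 "FV z" a0] by (auto simp: fv_plugE X_def)
  have vs: "val_subst g0" "val_subst g0'" using lr_subst_val_subst gr gr' by blast+
  from rtranclp_imp_relpowp[OF E0(1)] obtain j
    where "(rd ^^ j) (opn a0 (FV z)) (plugE E0 (App (FV y) v0))" ..
  from relpowp_rd_open_inst[OF this vs[unfolded g0'_def]] z(1)
  have left: "(rd ^^ j) (opn (msubst g0 a0) u0) (plugE (msubstE g0' E0) (App (g0 y) (msubst g0' v0)))"
    by (simp add: g0'_def)
  define K where "K = i - j"
  have "val_rel_in_lr (K - 1)" "lr_subst (K - 1) g0' g1' X"
    using Vlr lr_subst_mono[OF gr'] by (simp_all add: K_def)
  moreover have "val_rel R v0 (FV z)" using E0(5) val_rel_converse by blast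
  moreover have "fv v0 \<union> fv (FV z) \<subseteq> X" using fv by (simp add: X_def)
  ultimately have "lr_nf (K - 1) (msubst g0' v0) (msubst g1' (FV z))"
    by (blast intro: val_rel_in_lrD)
  moreover have "is_val (msubst g0' v0)"
    using E0(5) vs(2) by (auto simp: val_rel_def is_val_msubst)
  moreover have "lr_ctx i' (msubstE g0' E0) Hole" if "i' < K" for i'
    using lr_ctx_of_R[of i' E0 x Hole, OF Rlr _ _ lr_subst_mono[OF gr']] that E0(3,4) fv
    by (fastforce simp: K_def)
  ultimately have "lr_tm K (plugE (msubstE g0' E0) (App (g0 y) (msubst g0' v0)))
      (plugE Hole (App (g1 y) u1))"
    using gr E0(2) pure_msubstE vs lr_subst_closed_ctx[OF gr' fv(1)]
    by (intro lr_tm_plug_beta) (auto simp: g1'_def lr_subst_def val_subst_def K_def intro: lr_nf_mono)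
  moreover have "rd (App (g1 y) u1) (opn b1 u1)"
    using b1 lr_subst_closed_range(2)[OF gr, of y] lr_nf_closed[OF u(1)] u(3)
    by (auto intro: rd_beta_closed)
  ultimately show ?thesis
    using lr_tm_expand[OF left, of i] by (simp add: K_def lr_tm_reduce_right)
qed

lemma lr_tm_val_rel_Lam_Lam:
  assumes Rlr: "R_in_lr i" and vr: "val_rel R (Lam a0) (Lam a1)"
    and gr: "lr_subst (Suc i) g0 g1 (fv a0 \<union> fv a1)" and u: "lr_nf i u0 u1" "is_val u0" "is_val u1"
  shows "lr_tm i (opn (msubst g0 a0) u0) (opn (msubst g1 a1) u1)"
proof -
  obtain z where z: "z \<notin> fv a0 \<union> fv a1" "R (opn a0 (FV z)) (opn a1 (FV z))"
    using vr unfolding val_rel_def by auto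
  have "fv (opn a0 (FV z)) \<union> fv (opn a1 (FV z)) \<subseteq> insert z (fv a0 \<union> fv a1)"
    using fv_open[of 0 "FV z" a0] fv_open[of 0 "FV z" a1] by auto
  with z(2) have "lr_tm i (msubst (g0(z := u0)) (opn a0 (FV z))) (msubst (g1(z := u1)) (opn a1 (FV z)))"
    by (intro R_in_lr_upd[OF Rlr _ lr_subst_mono[OF gr]] u) auto
  with z(1) lr_subst_val_subst[OF gr] show ?thesis by (simp add: msubst_upd_open)
qed

lemma lr_tm_val_rel_app:
  assumes Rlr: "\<And>i'. i' \<le> i \<Longrightarrow> R_in_lr i'" and Vlr: "\<And>i'. i' \<le> i \<Longrightarrow> val_rel_in_lr i'"
    and vr: "val_rel R m0 m1" and gr: "lr_subst (Suc i) g0 g1 (fv m0 \<union> fv m1)"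
    and b: "msubst g0 m0 = Lam b0" "msubst g1 m1 = Lam b1"
    and u: "lr_nf i u0 u1" "is_val u0" "is_val u1"
  shows "lr_tm i (opn b0 u0) (opn b1 u1)"
proof -
  have "is_val m0" "is_val m1" using vr unfolding val_rel_def by auto
  then consider (FV_FV) y y' where "m0 = FV y" "m1 = FV y'"
    | (FV_Lam) y a1 where "m0 = FV y" "m1 = Lam a1"
    | (Lam_FV) a0 y where "m0 = Lam a0" "m1 = FV y"
    | (Lam_Lam) a0 a1 where "m0 = Lam a0" "m1 = Lam a1"
    by (cases m0; cases m1) auto
  then show ?thesis
  proof cases
    case (FV_FV y y')
    with vr have "y' = y" using val_rel_FV by blast
    with FV_FV gr b u show ?thesis by (auto simp: lr_subst_def intro: lr_nf_LamD)
  next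
    case (FV_Lam y a1)
    with vr gr b u Rlr Vlr show ?thesis
      using lr_tm_val_rel_FV_Lam[of i y a1 g0 g1 b0 u0 u1] by auto
  next
    case (Lam_FV a0 y)
    with vr gr b u Rlr Vlr show ?thesis
      using lr_tm_val_rel_Lam_FV[of i a0 y g0 g1 b1 u0 u1] by (auto simp: Un_commute)
  next
    case (Lam_Lam a0 a1)
    with vr gr b u Rlr show ?thesis
      using lr_tm_val_rel_Lam_Lam[of i a0 a1 g0 g1 u0 u1] by auto
  qed
qed

lemma val_rel_in_lr_step:
  assumes Rlr: "\<And>i. i < K \<Longrightarrow> R_in_lr i" and Vlr: "\<And>i. i < K \<Longrightarrow> val_rel_in_lr i"
  shows "val_rel_in_lr K"
  unfolding val_rel_in_lr_def
proof (intro allI impI)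
  fix m0 m1 g0 g1
  assume vr: "val_rel R m0 m1" and gr: "lr_subst K g0 g1 (fv m0 \<union> fv m1)"
  have "is_val m0" "is_val m1" using vr unfolding val_rel_def by auto
  moreover have "closed (msubst g0 m0)" "closed (msubst g1 m1)"
    using lr_subst_closed[OF gr] val_rel_lc[OF vr] by auto
  ultimately obtain b0 b1 where b: "msubst g0 m0 = Lam b0" "msubst g1 m1 = Lam b1"
    using closed_val_Lam is_val_msubst lr_subst_val_subst[OF gr] by metis
  have "lr_tm i (opn b0 u0) (opn b1 u1)"
    if "i < K" and "lr_nf i u0 u1" "is_val u0" "is_val u1" for i u0 u1
    using that lr_subst_mono[OF gr] Rlr Vlr
    by (intro lr_tm_val_rel_app[OF _ _ vr _ b]) auto
  with b \<open>closed (msubst g0 m0)\<close> \<open>closed (msubst g1 m1)\<close>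
  show "lr_nf K (msubst g0 m0) (msubst g1 m1)" by (auto intro: lr_nf_LamI)
qed

end

context nf_bisimulation
begin

lemma lr_nf_control_of_R:
  assumes Rlr: "\<And>i. i < K \<Longrightarrow> R_in_lr i"
    and F: "pure F0" "pure F1" "ctx_rel R F0 F1"
    and k: "k \<notin> fv (plugE F0 (Shift b0)) \<union> fv (plugE F1 (Shift b1))"
    and Rk: "R (Reset (opn b0 (FV k))) (Reset (opn b1 (FV k)))"
    and gr: "lr_subst K g0 g1 X"
    and X: "fv (plugE F0 (Shift b0)) \<union> fv (plugE F1 (Shift b1)) \<subseteq> X"
    and lc: "lc (plugE F0 (Shift b0))" "lc (plugE F1 (Shift b1))"
  shows "lr_nf K (msubst g0 (plugE F0 (Shift b0))) (msubst g1 (plugE F1 (Shift b1)))"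
  unfolding msubst_plugE msubst.simps
proof (rule lr_nf_controlI)
  have vs: "val_subst g0" "val_subst g1" using lr_subst_val_subst[OF gr] by auto
  then show "pure (msubstE g0 F0)" "pure (msubstE g1 F1)" using F pure_msubstE by auto
  show "closed (plugE (msubstE g0 F0) (Shift (msubst g0 b0)))"
    "closed (plugE (msubstE g1 F1) (Shift (msubst g1 b1)))"
    using lr_subst_closed[OF gr _ lc(1)] lr_subst_closed[OF gr _ lc(2)] X
    by (auto simp: msubst_plugE)
  obtain x where x: "x \<notin> fvE F0 \<union> fvE F1" "R (plugE F0 (FV x)) (plugE F1 (FV x))"
    using F unfolding ctx_rel_def by auto
  fix i assume "i < K"
  then show "lr_ctx i (msubstE g0 F0) (msubstE g1 F1)"
    using lr_ctx_of_R[OF Rlr x(2) x(1) lr_subst_mono[OF gr]] X by (auto simp: fv_plugE)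
  fix c0 c1 assume c: "lr_nf i c0 c1" "is_val c0" "is_val c1"
  have "fv (Reset (opn b0 (FV k))) \<union> fv (Reset (opn b1 (FV k))) \<subseteq> insert k X"
    using X fv_open[of 0 "FV k" b0] fv_open[of 0 "FV k" b1] by (auto simp: fv_plugE)
  with \<open>i < K\<close> have "lr_tm i (msubst (g0(k := c0)) (Reset (opn b0 (FV k))))
      (msubst (g1(k := c1)) (Reset (opn b1 (FV k))))"
    using R_in_lr_upd[OF Rlr Rk lr_subst_mono[OF gr] _ c] by auto
  with k vs show "lr_tm i (Reset (opn (msubst g0 b0) c0)) (Reset (opn (msubst g1 b1) c1))"
    by (simp add: msubst_upd_open fv_plugE)
qed

lemma lr_tm_open_stuck_of_R:
  assumes Rlr: "\<And>i. i < K \<Longrightarrow> R_in_lr i" and Vlr: "val_rel_in_lr (K - 1)"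
    and E: "evctx E0" "evctx E1" "ctx_rel R E0 E1" and vr: "val_rel R v0 v1"
    and gr: "lr_subst K g0 g1 X"
    and X: "fv (plugE E0 (App (FV y) v0)) \<union> fv (plugE E1 (App (FV y) v1)) \<subseteq> X"
    and lc: "lc (plugE E0 (App (FV y) v0))"
  shows "lr_tm K (msubst g0 (plugE E0 (App (FV y) v0))) (msubst g1 (plugE E1 (App (FV y) v1)))"
proof -
  have vs: "val_subst g0" "val_subst g1" using lr_subst_val_subst[OF gr] by auto
  have fvs: "y \<in> X" "fvE E0 \<subseteq> X" "fvE E1 \<subseteq> X" using X by (auto simp: fv_plugE)
  have Ly: "lr_nf K (g0 y) (g1 y)" "is_val (g0 y)"
    using gr fvs(1) by (auto simp: lr_subst_def val_subst_def)
  have "lr_subst (K - 1) g0 g1 X" using lr_subst_mono[OF gr] by simp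
  with X have Lv: "lr_nf (K - 1) (msubst g0 v0) (msubst g1 v1)" "is_val (msubst g0 v0)"
    using val_rel_in_lrD[OF Vlr vr] vr vs by (auto simp: val_rel_def fv_plugE is_val_msubst)
  from E(3)[unfolded ctx_rel_def] show ?thesis
  proof (elim disjE exE conjE)
    fix E0' F0 E1' F1 x
    assume h: "E0 = compE E0' (Rst F0)" "E1 = compE E1' (Rst F1)" "pure F0" "pure F1"
      "x \<notin> fvE E0 \<union> fvE E1" "R (plugE E0' (FV x)) (plugE E1' (FV x))"
      "R (Reset (plugE F0 (FV x))) (Reset (plugE F1 (FV x)))"
    have "lc (plugE F0 (App (FV y) v0))"
      using lc h(1) lc_plugE_hole[of 0 E0' "Reset (plugE F0 (App (FV y) v0))"]
      by (simp add: plugE_compE)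
    then have "closed (plugE (msubstE g0 F0) (App (g0 y) (msubst g0 v0)))"
      using lr_subst_closed(1)[OF gr, of "plugE F0 (App (FV y) v0)"] X h(1)
      by (auto simp: msubst_plugE fv_plugE)
    with h fvs vs E Ly Lv show ?thesis
      using lr_rctx_of_R[OF Rlr h(7) _ lr_subst_mono[OF gr]]
        lr_ctx_of_R[OF Rlr h(6) _ lr_subst_mono[OF gr]]
      by (auto simp: msubst_plugE plugE_compE msubstE_compE pure_msubstE evctx_msubstE
          lr_subst_closed_ctx[OF gr] intro!: lr_tm_plug_reset_beta_val)
  next
    fix x
    assume h: "pure E0" "pure E1" "x \<notin> fvE E0 \<union> fvE E1" "R (plugE E0 (FV x)) (plugE E1 (FV x))"
    with fvs vs Ly Lv show ?thesis
      using lr_ctx_of_R[OF Rlr h(4) h(3) lr_subst_mono[OF gr]]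
      by (auto simp: msubst_plugE pure_msubstE lr_subst_closed_ctx[OF gr] intro!: lr_tm_plug_beta)
  qed
qed

lemma lr_tm_nf_rel:
  assumes Rlr: "\<And>i. i < K \<Longrightarrow> R_in_lr i" and Vlr: "\<And>i. i \<le> K \<Longrightarrow> val_rel_in_lr i"
    and nfr: "nf_rel R m0 m1" and gr: "lr_subst K g0 g1 (fv m0 \<union> fv m1)" and lc: "lc m0" "lc m1"
  shows "lr_tm K (msubst g0 m0) (msubst g1 m1)"
proof -
  have vs: "val_subst g0" "val_subst g1" using lr_subst_val_subst[OF gr] by auto
  from nfr[unfolded nf_rel_def] show ?thesis
  proof (elim disjE exE conjE)
    assume vr: "val_rel R m0 m1"
    with Vlr[of K] gr have "lr_nf K (msubst g0 m0) (msubst g1 m1)"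
      by (simp add: val_rel_in_lrD)
    moreover from vr vs have "is_val (msubst g0 m0)" "is_val (msubst g1 m1)"
      unfolding val_rel_def by (auto simp: is_val_msubst)
    ultimately show ?thesis by (intro lr_tm_nfI[OF val_nf rtranclp.rtrancl_refl val_nf])
  next
    fix F0 F1 b0 b1 k
    assume h: "pure F0" "pure F1" "m0 = plugE F0 (Shift b0)" "m1 = plugE F1 (Shift b1)"
      "ctx_rel R F0 F1" "k \<notin> fv m0 \<union> fv m1" "R (Reset (opn b0 (FV k))) (Reset (opn b1 (FV k)))"
    then have "lr_nf K (msubst g0 m0) (msubst g1 m1)"
      using lr_nf_control_of_R[OF Rlr h(1,2,5) _ h(7) gr] lc by simp
    with h vs show ?thesis
      by (simp add: msubst_plugE pure_msubstE control_nf lr_tm_nfI[OF _ rtranclp.rtrancl_refl])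
  next
    fix E0 E1 x v0 v1
    assume h: "evctx E0" "evctx E1" "m0 = plugE E0 (App (FV x) v0)"
      "m1 = plugE E1 (App (FV x) v1)" "ctx_rel R E0 E1" "val_rel R v0 v1"
    then show ?thesis
      using lr_tm_open_stuck_of_R[OF Rlr _ h(1,2,5,6) gr] Vlr[of "K - 1"] lc by simp
  qed
qed

lemma R_in_lr_step:
  assumes Rlr: "\<And>i. i < K \<Longrightarrow> R_in_lr i" and Vlr: "\<And>i. i \<le> K \<Longrightarrow> val_rel_in_lr i"
  shows "R_in_lr K"
  unfolding R_in_lr_def
proof (intro allI impI)
  fix t0 t1 g0 g1
  assume R: "R t0 t1" and gr: "lr_subst K g0 g1 (fv t0 \<union> fv t1)"
  then have "val_subst g0" "val_subst g1" using lr_subst_val_subst by blast+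
  then have lift: "\<And>s s'. rd s s' \<Longrightarrow> rd (msubst g0 s) (msubst g0 s')"
    "\<And>s s'. rd s s' \<Longrightarrow> rd (msubst g1 s) (msubst g1 s')"
    by (simp_all add: rd_msubst)
  show "lr_tm K (msubst g0 t0) (msubst g1 t1)"
  proof (rule lr_tm_bind[OF lift])
    fix j m0
    assume j: "j \<le> K" and m0: "(rd ^^ j) t0 m0" "nf m0"
    then obtain m1 where m1: "rd\<^sup>*\<^sup>* t1 m1" "nf m1" "nf_rel R m0 m1"
      using R_sim[OF R relpowp_imp_rtranclp] by blast
    have "fv m0 \<union> fv m1 \<subseteq> fv t0 \<union> fv t1"
      using rtranclp_rd_fv[OF relpowp_imp_rtranclp[OF m0(1)]] rtranclp_rd_fv[OF m1(1)] by auto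
    moreover have "lc m0" "lc m1"
      using rtranclp_rd_lc[OF relpowp_imp_rtranclp[OF m0(1)]] rtranclp_rd_lc[OF m1(1)] R_lc[OF R]
      by auto
    ultimately have "lr_tm (K - j) (msubst g0 m0) (msubst g1 m1)"
      using Rlr Vlr m1(3) lr_subst_mono[OF gr, of "K - j"] by (intro lr_tm_nf_rel) auto
    with m1(1) show "\<exists>m1. rd\<^sup>*\<^sup>* t1 m1 \<and> lr_tm (K - j) (msubst g0 m0) (msubst g1 m1)"
      by blast
  qed
qed

lemma R_in_lr_all: "R_in_lr K \<and> val_rel_in_lr K"
proof (induction K rule: less_induct)
  case (less K)
  have V: "val_rel_in_lr K"
    by (rule val_rel_in_lr_step) (use less in blast)+
  have "R_in_lr K"
  proof (rule R_in_lr_step)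
    show "R_in_lr i" if "i < K" for i using less that by blast
    show "val_rel_in_lr i" if "i \<le> K" for i using less that V by (cases "i = K") auto
  qed
  with V show ?case by blast
qed

lemma fundamental:
  "R t0 t1 \<Longrightarrow> lr_subst K g0 g1 (fv t0 \<union> fv t1) \<Longrightarrow> lr_tm K (msubst g0 t0) (msubst g1 t1)"
  using R_in_lr_all unfolding R_in_lr_def by blast

end

section \<open>The open relation is a congruence and adequate\<close>

definition lr_open :: "trm \<Rightarrow> trm \<Rightarrow> bool" where
  "lr_open t0 t1 \<longleftrightarrow> lc t0 \<and> lc t1 \<and>
     (\<forall>K g0 g1. lr_subst K g0 g1 (fv t0 \<union> fv t1) \<longrightarrow> lr_tm K (msubst g0 t0) (msubst g1 t1))"

lemma lr_openD:
  "lr_open t0 t1 \<Longrightarrow> lr_subst K g0 g1 (fv t0 \<union> fv t1) \<Longrightarrow> lr_tm K (msubst g0 t0) (msubst g1 t1)"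
  unfolding lr_open_def by blast

lemma (in nf_bisimulation) lr_open_of_R: "R t0 t1 \<Longrightarrow> lr_open t0 t1"
  unfolding lr_open_def using R_lc fundamental by blast

lemma lr_open_FV: "lr_open (FV x) (FV x)"
  unfolding lr_open_def by (auto intro: lr_subst_lr_tm)

lemma lr_open_App:
  assumes a: "lr_open a0 a1" and c: "lr_open c0 c1"
  shows "lr_open (App a0 c0) (App a1 c1)"
  unfolding lr_open_def[of "App a0 c0"]
proof (intro conjI allI impI)
  show "lc (App a0 c0)" "lc (App a1 c1)" using a c unfolding lr_open_def by auto
  fix K g0 g1 assume gr: "lr_subst K g0 g1 (fv (App a0 c0) \<union> fv (App a1 c1))"
  then have gr': "lr_subst K g0 g1 (fv a0 \<union> fv a1)" "lr_subst K g0 g1 (fv c0 \<union> fv c1)"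
    by (auto elim: lr_subst_mono)
  then have "lr_tm K (msubst g0 a0) (msubst g1 a1)" "lr_tm K (msubst g0 c0) (msubst g1 c1)"
    using lr_openD a c by blast+
  moreover have "closed (msubst g0 c0)" "closed (msubst g1 c1)"
    using c lr_subst_closed[OF gr'(2)] unfolding lr_open_def by auto
  ultimately show "lr_tm K (msubst g0 (App a0 c0)) (msubst g1 (App a1 c1))"
    by (simp add: lr_tm_App)
qed

lemma lr_open_Reset: "lr_open t0 t1 \<Longrightarrow> lr_open (Reset t0) (Reset t1)"
  unfolding lr_open_def by (simp add: lr_tm_Reset)

lemma lr_open_close_inst:
  assumes ol: "lr_open t0 t1" and gr: "lr_subst K g0 g1 X" and X: "fv t0 \<union> fv t1 \<subseteq> insert x X"
    and "i \<le> K" and u: "lr_nf i u0 u1" "is_val u0" "is_val u1"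
  shows "lr_tm i (opn (msubst g0 (close_at 0 x t0)) u0) (opn (msubst g1 (close_at 0 x t1)) u1)"
proof -
  have lc: "lc t0" "lc t1" using ol unfolding lr_open_def by auto
  have "lr_subst i (g0(x := u0)) (g1(x := u1)) (fv t0 \<union> fv t1)"
    using lr_subst_upd_mono[OF gr \<open>i \<le> K\<close> u X] .
  with ol have "lr_tm i (msubst (g0(x := u0)) t0) (msubst (g1(x := u1)) t1)"
    by (rule lr_openD)
  moreover have "\<And>y. lc (g0 y)" "\<And>y. lc (g1 y)" "lc u0" "lc u1"
    using lr_subst_val_subst[OF gr] lr_nf_closed[OF u(1)] by (auto simp: val_subst_def closed_def)
  ultimately show ?thesis using lc by (simp add: open_msubst_close)
qed

lemma lr_open_lam: "lr_open t0 t1 \<Longrightarrow> lr_open (lam x t0) (lam x t1)"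
  unfolding lr_open_def[of "lam x t0"]
proof (intro conjI allI impI)
  assume ol: "lr_open t0 t1"
  then show "lc (lam x t0)" "lc (lam x t1)" unfolding lr_open_def by (auto intro: lc_lam)
  fix K g0 g1 assume gr: "lr_subst K g0 g1 (fv (lam x t0) \<union> fv (lam x t1))"
  then have "closed (msubst g0 (lam x t0))" "closed (msubst g1 (lam x t1))"
    using lr_subst_closed \<open>lc (lam x t0)\<close> \<open>lc (lam x t1)\<close> by auto
  moreover have "lr_tm i (opn (msubst g0 (close_at 0 x t0)) u0) (opn (msubst g1 (close_at 0 x t1)) u1)"
    if "i < K" "lr_nf i u0 u1" "is_val u0" "is_val u1" for i u0 u1
    using lr_open_close_inst[OF ol gr _ _ that(2-4)] that(1) by (auto simp: fv_lam)
  ultimately have "lr_nf K (msubst g0 (lam x t0)) (msubst g1 (lam x t1))"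
    by (auto simp: lam_def intro: lr_nf_LamI)
  then show "lr_tm K (msubst g0 (lam x t0)) (msubst g1 (lam x t1))"
    by (auto simp: lam_def intro: lr_tm_nfI[OF val_nf rtranclp.rtrancl_refl val_nf])
qed

lemma lr_open_shift: "lr_open t0 t1 \<Longrightarrow> lr_open (shift x t0) (shift x t1)"
  unfolding lr_open_def[of "shift x t0"]
proof (intro conjI allI impI)
  assume ol: "lr_open t0 t1"
  then show "lc (shift x t0)" "lc (shift x t1)" unfolding lr_open_def by (auto intro: lc_shift)
  fix K g0 g1 assume gr: "lr_subst K g0 g1 (fv (shift x t0) \<union> fv (shift x t1))"
  then have "closed (msubst g0 (shift x t0))" "closed (msubst g1 (shift x t1))"
    using lr_subst_closed \<open>lc (shift x t0)\<close> \<open>lc (shift x t1)\<close> by auto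
  moreover have "lr_tm i (Reset (opn (msubst g0 (close_at 0 x t0)) c0))
      (Reset (opn (msubst g1 (close_at 0 x t1)) c1))"
    if "i < K" "lr_nf i c0 c1" "is_val c0" "is_val c1" for i c0 c1
    using lr_open_close_inst[OF ol gr _ _ that(2-4)] that(1)
    by (auto simp: fv_shift intro: lr_tm_Reset)
  ultimately have "lr_nf K (plugE Hole (Shift (msubst g0 (close_at 0 x t0))))
      (plugE Hole (Shift (msubst g1 (close_at 0 x t1))))"
    by (intro lr_nf_controlI) (auto simp: shift_def lr_ctx_Hole)
  then show "lr_tm K (msubst g0 (shift x t0)) (msubst g1 (shift x t1))"
    using control_nf[of Hole] by (auto simp: shift_def intro: lr_tm_nfI[OF _ rtranclp.rtrancl_refl])
qed

lemma lr_open_refl: "lc t \<Longrightarrow> lr_open t t"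
proof (induction "size t" arbitrary: t rule: less_induct)
  case less
  have IH: "lr_open s s" if "size s < size t" "lc s" for s
    using less.hyps that by blast
  show ?case
  proof (cases t)
    case (BV i)
    then show ?thesis using less.prems by simp
  next
    case (FV x)
    then show ?thesis using lr_open_FV by simp
  next
    case (App a c)
    then show ?thesis using less.prems IH[of a] IH[of c] lr_open_App by simp
  next
    case (Reset a)
    then show ?thesis using less.prems IH[of a] lr_open_Reset by simp
  next
    case (Lam b)
    obtain y where y: "y \<notin> fv b" using finite_fv ex_new_if_finite infinite_UNIV_nat by blast
    have "lr_open (opn b (FV y)) (opn b (FV y))"
      using IH less.prems Lam by (simp add: lc_open)
    with Lam show ?thesis using lr_open_lam Lam_eq_lam[OF y] by simp
  next
    case (Shift b)
    obtain y where y: "y \<notin> fv b" using finite_fv ex_new_if_finite infinite_UNIV_nat by blast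
    have "lr_open (opn b (FV y)) (opn b (FV y))"
      using IH less.prems Shift by (simp add: lc_open)
    with Shift show ?thesis using lr_open_shift Shift_eq_shift[OF y] by simp
  qed
qed

lemma lr_open_plugC: "wf_ctx C \<Longrightarrow> lr_open t0 t1 \<Longrightarrow> lr_open (plugC C t0) (plugC C t1)"
proof (induction C)
  case (CLam x C)
  then show ?case using lr_open_lam by simp
next
  case (CAppL C s)
  then show ?case using lr_open_App lr_open_refl by simp
next
  case (CAppR s C)
  then show ?case using lr_open_App lr_open_refl by simp
next
  case (CShift k C)
  then show ?case using lr_open_shift by simp
next
  case (CReset C)
  then show ?case using lr_open_Reset by simp
qed simp

lemma lr_open_eval:
  assumes ol: "lr_open s0 s1" and closed: "fv s0 = {}" "fv s1 = {}" and ev: "eval s0 n0"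
  obtains n1 where "eval s1 n1" "lr_nf 0 n0 n1"
proof -
  from ev have n0: "rd\<^sup>*\<^sup>* s0 n0" "nf n0" unfolding eval_iff by auto
  from rtranclp_imp_relpowp[OF n0(1)] obtain j where j: "(rd ^^ j) s0 n0" ..
  have "lr_subst j FV FV (fv s0 \<union> fv s1)" using lr_subst_FV closed by simp
  with ol have "lr_tm j (msubst FV s0) (msubst FV s1)" by (rule lr_openD)
  then have "lr_tm j s0 s1" by simp
  from lr_tmD[OF this order_refl j n0(2)]
  obtain n1 where "rd\<^sup>*\<^sup>* s1 n1" "nf n1" "lr_nf (j - j) n0 n1" by blast
  with that show ?thesis unfolding eval_iff by simp
qed

lemma lr_open_observe:
  assumes "lr_open s0 s1" "fv s0 = {}" "fv s1 = {}"
  shows "((\<exists>v0. eval s0 v0 \<and> is_val v0) \<longrightarrow> (\<exists>v1. eval s1 v1 \<and> is_val v1)) \<and>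
    ((\<exists>u0. eval s0 u0 \<and> control_stuck u0) \<longrightarrow> (\<exists>u1. eval s1 u1 \<and> control_stuck u1))"
proof (intro conjI impI; elim exE conjE)
  fix v0 assume "eval s0 v0" "is_val v0"
  from \<open>eval s0 v0\<close> obtain v1 where "eval s1 v1" "lr_nf 0 v0 v1" by (rule lr_open_eval[OF assms])
  with \<open>is_val v0\<close> show "\<exists>v1. eval s1 v1 \<and> is_val v1"
    using lr_nf_val[of 0 v0 v1] by auto
next
  fix u0 assume "eval s0 u0" "control_stuck u0"
  from \<open>eval s0 u0\<close> obtain u1 where u1: "eval s1 u1" "lr_nf 0 u0 u1" by (rule lr_open_eval[OF assms])
  from u1(2) have "control_stuck u1"
  proof (cases rule: lr_nf_cases)
    case Lam
    with \<open>control_stuck u0\<close> show ?thesis by (auto simp: control_stuck_def)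
  next
    case control
    then show ?thesis by (auto simp: control_stuck_def)
  qed
  with u1(1) show "\<exists>u1. eval s1 u1 \<and> control_stuck u1" by blast
qed

theorem theorem1:
  assumes "lc t0" and "lc t1" and "nf_bisimilar t0 t1"
  shows "ctx_equiv t0 t1"
proof -
  obtain R where R: "nf_bisim R" "R t0 t1"
    using assms(3) unfolding nf_bisimilar_def by blast
  interpret R: nf_bisimulation R by (rule nf_bisimulation.intro) (fact R(1))
  interpret R_conv: nf_bisimulation "\<lambda>a b. R b a"
    by (rule nf_bisimulation.intro) (rule nf_bisim_converse[OF R(1)])
  have "lr_open t0 t1" "lr_open t1 t0"
    using R.lr_open_of_R R_conv.lr_open_of_R R(2) by blast+
  then have "lr_open (plugC C t0) (plugC C t1) \<and> lr_open (plugC C t1) (plugC C t0)"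
    if "wf_ctx C" for C
    using that lr_open_plugC by blast
  then show ?thesis
    unfolding ctx_equiv_def using lr_open_observe by blast
qed

end
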